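(* Let $\mathcal U$ and $\mathcal V$ be TRO's. The identity map on $\mathcal U\otimes\mathcal V$ extends to a complete contraction $\mathcal U\otimes_{\rm h}\mathcal V\to\mathcal U\otimes_{\rm tmax}\mathcal V$.
   Context: A TRO is a norm-closed subspace $\mathcal U\subseteq\mathcal B(H,K)$ with $RS^*T\in\mathcal U$ for all $R,S,T\in\mathcal U$; it carries the operator space structure inherited from $M_n(\mathcal B(H,K))=\mathcal B(H^n,K^n)$ (which is independent of the concrete realisation). $\mathcal U\otimes_{\rm h}\mathcal V$ is the Haagerup tensor product of these operator spaces. A ternary morphism is a linear map $\theta$ with $\theta(uv^*w)=\theta(u)\theta(v)^*\theta(w)$. A pair of ternary morphisms $\phi:\mathcal U\to\mathcal B(H)$, $\psi:\mathcal V\to\mathcal B(H)$ is commuting if $\phi(u)\psi(v)=\psi(v)\phi(u)$ and $\phi(u)\psi(v)^*=\psi(v)^*\phi(u)$ for all $u,v$; $\phi\cdot\psi$ is the linear map $u\otimes v\mapsto\phi(u)\psi(v)$. The operator space $\mathcal U\otimes_{\rm tmax}\mathcal V$ is the completion of $\mathcal U\otimes\mathcal V$ with matricial norms $\|[w_{i,j}]\|_n=\sup\|[(\phi\cdot\psi)(w_{i,j})]\|$, the supremum over all commuting pairs $(\phi,\psi)$ on all Hilbert spaces. *)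

theory Defs
  imports "HOL-Analysis.Analysis"
begin

class complex_vector = real_vector +
  fixes scaleC :: "complex \<Rightarrow> 'a \<Rightarrow> 'a"  (infixr \<open>*\<^sub>C\<close> 75)
  assumes scaleR_scaleC: "scaleR r x = scaleC (complex_of_real r) x"
    and scaleC_add_right: "a *\<^sub>C (x + y) = a *\<^sub>C x + a *\<^sub>C y"
    and scaleC_add_left: "(a + b) *\<^sub>C x = a *\<^sub>C x + b *\<^sub>C x"
    and scaleC_scaleC: "a *\<^sub>C (b *\<^sub>C x) = (a * b) *\<^sub>C x"
    and scaleC_one: "1 *\<^sub>C x = x"

class complex_normed_vector = complex_vector + real_normed_vector +
  assumes norm_scaleC: "norm (a *\<^sub>C x) = cmod a * norm x"

class complex_inner = complex_normed_vector +
  fixes cinner :: "'a \<Rightarrow> 'a \<Rightarrow> complex"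
  assumes cinner_commute: "cinner x y = cnj (cinner y x)"
    and cinner_add_right: "cinner x (y + z) = cinner x y + cinner x z"
    and cinner_scaleC_right: "cinner x (a *\<^sub>C y) = a * cinner x y"
    and cinner_norm: "cinner x x = complex_of_real ((norm x)\<^sup>2)"

class chilbert_space = complex_inner + complete_space

definition clinear_map :: "('a::complex_vector \<Rightarrow> 'b::complex_vector) \<Rightarrow> bool" where
  "clinear_map f \<longleftrightarrow> (\<forall>x y. f (x + y) = f x + f y) \<and> (\<forall>c x. f (c *\<^sub>C x) = c *\<^sub>C f x)"

definition bounded_op :: "('a::complex_normed_vector \<Rightarrow> 'b::complex_normed_vector) \<Rightarrow> bool" where
  "bounded_op T \<longleftrightarrow> clinear_map T \<and> (\<exists>K. \<forall>x. norm (T x) \<le> K * norm x)"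

definition op_norm :: "('a::complex_normed_vector \<Rightarrow> 'b::complex_normed_vector) \<Rightarrow> real" where
  "op_norm T = Sup {norm (T x) | x. norm x \<le> 1}"

definition adj :: "('a::chilbert_space \<Rightarrow> 'b::chilbert_space) \<Rightarrow> ('b \<Rightarrow> 'a)" where
  "adj T = (THE S. \<forall>x y. cinner (T x) y = cinner x (S y))"

text \<open>Norm of an m \<times> p matrix [X i j] of operators H \<rightarrow> K, viewed as an
  operator H^p \<rightarrow> K^m (the operator space structure of B(H,K)).\<close>
definition mat_norm :: "nat \<Rightarrow> nat \<Rightarrow> (nat \<Rightarrow> nat \<Rightarrow> ('a::complex_normed_vector \<Rightarrow> 'b::complex_normed_vector)) \<Rightarrow> real" where
  "mat_norm m p X = Sup {sqrt (\<Sum>i<m. (norm (\<Sum>j<p. X i j (h j)))\<^sup>2) | h. (\<Sum>j<p. (norm (h j))\<^sup>2) \<le> 1}"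

definition is_TRO :: "('a::chilbert_space \<Rightarrow> 'b::chilbert_space) set \<Rightarrow> bool" where
  "is_TRO U \<longleftrightarrow>
     (\<forall>T\<in>U. bounded_op T) \<and>
     (\<lambda>_. 0) \<in> U \<and>
     (\<forall>S\<in>U. \<forall>T\<in>U. (\<lambda>x. S x + T x) \<in> U) \<and>
     (\<forall>c. \<forall>T\<in>U. (\<lambda>x. c *\<^sub>C T x) \<in> U) \<and>
     (\<forall>s T. (\<forall>k. s k \<in> U) \<and> bounded_op T \<and> (\<lambda>k. op_norm (\<lambda>x. s k x - T x)) \<longlonglongrightarrow> 0 \<longrightarrow> T \<in> U) \<and>
     (\<forall>R\<in>U. \<forall>S\<in>U. \<forall>T\<in>U. R \<circ> adj S \<circ> T \<in> U)"

definition ternary_morphism ::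
  "('a::chilbert_space \<Rightarrow> 'b::chilbert_space) set \<Rightarrow> (('a \<Rightarrow> 'b) \<Rightarrow> ('h::chilbert_space \<Rightarrow> 'h)) \<Rightarrow> bool" where
  "ternary_morphism U \<theta> \<longleftrightarrow>
     (\<forall>u\<in>U. bounded_op (\<theta> u)) \<and>
     (\<forall>u\<in>U. \<forall>v\<in>U. \<theta> (\<lambda>x. u x + v x) = (\<lambda>x. \<theta> u x + \<theta> v x)) \<and>
     (\<forall>c. \<forall>u\<in>U. \<theta> (\<lambda>x. c *\<^sub>C u x) = (\<lambda>x. c *\<^sub>C \<theta> u x)) \<and>
     (\<forall>u\<in>U. \<forall>v\<in>U. \<forall>w\<in>U. \<theta> (u \<circ> adj v \<circ> w) = \<theta> u \<circ> adj (\<theta> v) \<circ> \<theta> w)"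

definition commuting_pair ::
  "('a::chilbert_space \<Rightarrow> 'b::chilbert_space) set \<Rightarrow> ('c::chilbert_space \<Rightarrow> 'd::chilbert_space) set \<Rightarrow>
   (('a \<Rightarrow> 'b) \<Rightarrow> ('h::chilbert_space \<Rightarrow> 'h)) \<Rightarrow> (('c \<Rightarrow> 'd) \<Rightarrow> ('h \<Rightarrow> 'h)) \<Rightarrow> bool" where
  "commuting_pair U V \<phi> \<psi> \<longleftrightarrow>
     (\<forall>u\<in>U. \<forall>v\<in>V. \<phi> u \<circ> \<psi> v = \<psi> v \<circ> \<phi> u \<and> \<phi> u \<circ> adj (\<psi> v) = adj (\<psi> v) \<circ> \<phi> u)"

text \<open>Elements of the algebraic tensor product U \<otimes> V are represented by formal sums
  \<Sum> u_k \<otimes> v_k (lists of pairs); two formal sums represent the same tensor iff every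
  bilinear functional on U \<times> V takes the same value on them.\<close>


definition bilinear_fun ::
  "('a::chilbert_space \<Rightarrow> 'b::chilbert_space) set \<Rightarrow> ('c::chilbert_space \<Rightarrow> 'd::chilbert_space) set \<Rightarrow>
   (('a \<Rightarrow> 'b) \<Rightarrow> ('c \<Rightarrow> 'd) \<Rightarrow> complex) \<Rightarrow> bool" where
  "bilinear_fun U V f \<longleftrightarrow>
     (\<forall>u1\<in>U. \<forall>u2\<in>U. \<forall>v\<in>V. f (\<lambda>x. u1 x + u2 x) v = f u1 v + f u2 v) \<and>
     (\<forall>c. \<forall>u\<in>U. \<forall>v\<in>V. f (\<lambda>x. c *\<^sub>C u x) v = c * f u v) \<and>
     (\<forall>u\<in>U. \<forall>v1\<in>V. \<forall>v2\<in>V. f u (\<lambda>x. v1 x + v2 x) = f u v1 + f u v2) \<and>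
     (\<forall>c. \<forall>u\<in>U. \<forall>v\<in>V. f u (\<lambda>x. c *\<^sub>C v x) = c * f u v)"

definition tensor_eq ::
  "('a::chilbert_space \<Rightarrow> 'b::chilbert_space) set \<Rightarrow> ('c::chilbert_space \<Rightarrow> 'd::chilbert_space) set \<Rightarrow>
   (('a \<Rightarrow> 'b) \<times> ('c \<Rightarrow> 'd)) list \<Rightarrow> (('a \<Rightarrow> 'b) \<times> ('c \<Rightarrow> 'd)) list \<Rightarrow> bool" where
  "tensor_eq U V s t \<longleftrightarrow>
     (\<forall>f. bilinear_fun U V f \<longrightarrow> (\<Sum>(u,v)\<leftarrow>s. f u v) = (\<Sum>(u,v)\<leftarrow>t. f u v))"

definition hprod :: "nat \<Rightarrow> (nat \<Rightarrow> nat \<Rightarrow> 'u) \<Rightarrow> (nat \<Rightarrow> nat \<Rightarrow> 'v) \<Rightarrow> nat \<Rightarrow> nat \<Rightarrow> ('u \<times> 'v) list" where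
  "hprod p X Y i j = map (\<lambda>k. (X i k, Y k j)) [0..<p]"

definition h_norm ::
  "('a::chilbert_space \<Rightarrow> 'b::chilbert_space) set \<Rightarrow> ('c::chilbert_space \<Rightarrow> 'd::chilbert_space) set \<Rightarrow>
   nat \<Rightarrow> (nat \<Rightarrow> nat \<Rightarrow> (('a \<Rightarrow> 'b) \<times> ('c \<Rightarrow> 'd)) list) \<Rightarrow> real" where
  "h_norm U V n W = Inf {mat_norm n p X * mat_norm p n Y | p X Y.
      (\<forall>i<n. \<forall>k<p. X i k \<in> U) \<and> (\<forall>k<p. \<forall>j<n. Y k j \<in> V) \<and>
      (\<forall>i<n. \<forall>j<n. tensor_eq U V (hprod p X Y i j) (W i j))}"

definition tensor_map ::
  "(('a \<Rightarrow> 'b) \<Rightarrow> ('h \<Rightarrow> 'h::comm_monoid_add)) \<Rightarrow> (('c \<Rightarrow> 'd) \<Rightarrow> ('h \<Rightarrow> 'h)) \<Rightarrow>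
   (('a \<Rightarrow> 'b) \<times> ('c \<Rightarrow> 'd)) list \<Rightarrow> ('h \<Rightarrow> 'h)" where
  "tensor_map \<phi> \<psi> s = (\<lambda>x. \<Sum>(u,v)\<leftarrow>s. \<phi> u (\<psi> v x))"

end

theory Submission
  imports Defs
begin

text \<open>The Haagerup norm of \<open>W\<close> is the infimum of \<open>\<parallel>X\<parallel> \<parallel>Y\<parallel>\<close> over factorisations
  \<open>W = X \<odot> Y\<close>, and for such a factorisation \<open>(\<phi> \<cdot> \<psi>)(W)\<close> is the operator matrix product
  \<open>\<phi>(X) \<psi>(Y)\<close>. It therefore suffices that ternary morphisms are completely contractive,
  \<open>\<parallel>\<phi>(X)\<parallel> \<le> \<parallel>X\<parallel>\<close>.

  Suppose \<open>\<parallel>\<phi>(X)\<parallel> > \<parallel>X\<parallel>\<close> and put \<open>M = \<parallel>\<phi>(X)\<parallel>\<^sup>2\<close>. As \<open>M > \<parallel>X\<parallel>\<^sup>2\<close>, the Neumann series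
  \<open>L = \<Sum>\<^sub>m M\<^sup>-\<^sup>m\<^sup>-\<^sup>1 (X X\<^sup>*)\<^sup>m X\<close> converges inside the TRO and solves \<open>M L = X + X X\<^sup>* L\<close>, so
  \<open>T = \<phi>(X)\<close> and \<open>R = \<phi>(L)\<close> satisfy \<open>M R = T + T T\<^sup>* R\<close>. For a unit vector \<open>y\<close>, with
  \<open>z = T\<^sup>* y\<close> and \<open>t = \<parallel>z\<parallel>\<^sup>2\<close>, this gives \<open>t = \<langle>R z, M y - T z\<rangle>\<close> and
  \<open>\<parallel>M y - T z\<parallel>\<^sup>2 \<le> 2 M (M - t)\<close>, hence \<open>t\<^sup>2 \<le> 2 \<parallel>R\<parallel>\<^sup>2 M\<^sup>2 (M - t)\<close>. So \<open>t\<close> stays bounded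
  away from \<open>M = \<parallel>T\<^sup>*\<parallel>\<^sup>2\<close>, which is absurd.\<close>

instance chilbert_space \<subseteq> banach ..

lemma scaleC_zero_right [simp]: "c *\<^sub>C (0::'a::complex_vector) = 0"
proof -
  have "c *\<^sub>C (0::'a) = c *\<^sub>C 0 + c *\<^sub>C 0" by (metis scaleC_add_right add_0)
  then show ?thesis by simp
qed

lemma scaleC_zero_left [simp]: "(0::complex) *\<^sub>C (x::'a::complex_vector) = 0"
  by (metis scaleR_scaleC scaleR_zero_left of_real_0)

lemma scaleC_of_real: "complex_of_real r *\<^sub>C (x::'a::complex_vector) = r *\<^sub>R x"
  by (simp add: scaleR_scaleC)

lemma scaleC_sum_right: "c *\<^sub>C (\<Sum>i\<in>I. f i) = (\<Sum>i\<in>I. c *\<^sub>C (f i::'a::complex_vector))"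
  by (induction I rule: infinite_finite_induct) (auto simp: scaleC_add_right)

lemma cinner_add_left: "cinner (x + y) (z::'a::complex_inner) = cinner x z + cinner y z"
  by (subst (1 2 3) cinner_commute) (simp add: cinner_add_right)

lemma cinner_scaleC_left: "cinner (c *\<^sub>C x) (y::'a::complex_inner) = cnj c * cinner x y"
  by (subst (1 2) cinner_commute) (simp add: cinner_scaleC_right)

lemma cinner_zero_right [simp]: "cinner x (0::'a::complex_inner) = 0"
  using cinner_scaleC_right[of x 0 0] by simp

lemma cinner_zero_left [simp]: "cinner (0::'a::complex_inner) x = 0"
  by (subst cinner_commute) simp

lemma cinner_minus_right: "cinner x (- y) = - cinner x (y::'a::complex_inner)"
proof -
  have "cinner x (- y) + cinner x y = 0" by (simp flip: cinner_add_right)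
  then show ?thesis by (simp add: add_eq_0_iff2)
qed

lemma cinner_minus_left: "cinner (- x) y = - cinner x (y::'a::complex_inner)"
proof -
  have "cinner (- x) y + cinner x y = 0" by (simp flip: cinner_add_left)
  then show ?thesis by (simp add: add_eq_0_iff2)
qed

lemma cinner_diff_right: "cinner x (y - z) = cinner x y - cinner x (z::'a::complex_inner)"
  by (simp only: diff_conv_add_uminus cinner_add_right cinner_minus_right)

lemma cinner_diff_left: "cinner (x - y) z = cinner x z - cinner y (z::'a::complex_inner)"
  by (simp only: diff_conv_add_uminus cinner_add_left cinner_minus_left)

lemma cinner_sum_right: "cinner x (\<Sum>i\<in>I. f i) = (\<Sum>i\<in>I. cinner x (f i::'a::complex_inner))"
  by (induction I rule: infinite_finite_induct) (auto simp: cinner_add_right)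

lemma cinner_sum_left: "cinner (\<Sum>i\<in>I. f i) x = (\<Sum>i\<in>I. cinner (f i::'a::complex_inner) x)"
  by (induction I rule: infinite_finite_induct) (auto simp: cinner_add_left)

lemma cinner_sum_list_right:
  "cinner x (\<Sum>a\<leftarrow>xs. f a) = (\<Sum>a\<leftarrow>xs. cinner x (f a::'a::complex_inner))"
  by (induction xs) (auto simp: cinner_add_right)

lemma cinner_extensionality: "(\<And>z. cinner z x = cinner z y) \<Longrightarrow> x = (y::'a::complex_inner)"
proof -
  assume "\<And>z. cinner z x = cinner z y"
  then have "cinner (x - y) (x - y) = 0" by (simp add: cinner_diff_right)
  then show ?thesis by (simp add: cinner_norm)
qed

lemma Re_cinner_self: "Re (cinner x x) = (norm (x::'a::complex_inner))\<^sup>2"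
  by (simp add: cinner_norm)

lemma power2_norm_add:
  "(norm (x + y))\<^sup>2 = (norm x)\<^sup>2 + (norm y)\<^sup>2 + 2 * Re (cinner x (y::'a::complex_inner))"
proof -
  have "cinner (x + y) (x + y) = cinner x x + cinner y y + (cinner x y + cnj (cinner x y))"
    by (simp add: cinner_add_left cinner_add_right cinner_commute[of y x])
  then have "Re (cinner (x + y) (x + y)) = Re (cinner x x) + Re (cinner y y) + 2 * Re (cinner x y)"
    by simp
  then show ?thesis by (simp add: Re_cinner_self)
qed

lemma power2_norm_diff:
  "(norm (x - y))\<^sup>2 = (norm x)\<^sup>2 + (norm y)\<^sup>2 - 2 * Re (cinner x (y::'a::complex_inner))"
  using power2_norm_add[of x "- y"] by (simp add: cinner_minus_right)

lemma Re_cinner_le: "Re (cinner x y) \<le> norm x * norm (y::'a::complex_inner)"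
proof -
  have "(norm (x + y))\<^sup>2 \<le> (norm x + norm y)\<^sup>2"
    by (simp add: norm_triangle_ineq power_mono)
  then show ?thesis by (simp add: power2_norm_add power2_sum)
qed

text \<open>Rotate \<open>x\<close> by the phase of \<open>cinner x y\<close> to reduce to the real part.\<close>
lemma cinner_Cauchy_Schwarz: "cmod (cinner x y) \<le> norm x * norm (y::'a::complex_inner)"
proof (cases "cinner x y = 0")
  case False
  define c where "c = cinner x y"
  define w where "w = (c / complex_of_real (cmod c)) *\<^sub>C x"
  have "cinner w y = (c * cnj c) / complex_of_real (cmod c)"
    by (simp add: w_def cinner_scaleC_left c_def complex_cnj_divide)
  also have "\<dots> = complex_of_real (cmod c)"
    using False by (simp add: complex_norm_square[symmetric] c_def power2_eq_square)
  finally have "Re (cinner w y) = cmod c" by simp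
  moreover have "norm w = norm x"
    using False by (simp add: w_def c_def norm_scaleC norm_divide)
  ultimately show ?thesis using Re_cinner_le[of w y] c_def by simp
qed simp

lemma clinear_add: "clinear_map T \<Longrightarrow> T (x + y) = T x + T y"
  by (simp add: clinear_map_def)

lemma clinear_scaleC: "clinear_map T \<Longrightarrow> T (c *\<^sub>C x) = c *\<^sub>C T x"
  by (simp add: clinear_map_def)

lemma clinear_zero: "clinear_map (T::'a::complex_vector \<Rightarrow> 'b::complex_vector) \<Longrightarrow> T 0 = 0"
  using clinear_scaleC[of T 0 0] by simp

lemma clinear_scaleR:
  "clinear_map (T::'a::complex_vector \<Rightarrow> 'b::complex_vector) \<Longrightarrow> T (r *\<^sub>R x) = r *\<^sub>R T x"
  by (simp add: scaleR_scaleC clinear_scaleC)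

lemma clinear_sum:
  "clinear_map (T::'a::complex_vector \<Rightarrow> 'b::complex_vector) \<Longrightarrow> T (\<Sum>i\<in>I. f i) = (\<Sum>i\<in>I. T (f i))"
  by (induction I rule: infinite_finite_induct) (auto simp: clinear_add clinear_zero)

lemma bounded_op_clinear: "bounded_op T \<Longrightarrow> clinear_map T"
  by (simp add: bounded_op_def)

lemma bounded_op_intro:
  assumes "\<And>x y. T (x + y) = T x + T y" "\<And>c x. T (c *\<^sub>C x) = c *\<^sub>C T x"
    and "\<And>x. norm (T x) \<le> K * norm x"
  shows "bounded_op T"
  using assms by (auto simp: bounded_op_def clinear_map_def)

lemma bounded_op_nonneg_bound:
  "bounded_op (T::'a::complex_normed_vector \<Rightarrow> 'b::complex_normed_vector) \<Longrightarrow>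
    \<exists>K\<ge>0. \<forall>x. norm (T x) \<le> K * norm x"
proof -
  assume "bounded_op T"
  then obtain K where "\<forall>x. norm (T x) \<le> K * norm x" by (auto simp: bounded_op_def)
  then have "\<forall>x. norm (T x) \<le> max K 0 * norm x"
    by (meson max.cobounded1 mult_right_mono norm_ge_zero order_trans)
  then show ?thesis by (intro exI[of _ "max K 0"]) simp
qed

lemma bounded_op_bounded_linear:
  "bounded_op (T::'a::complex_normed_vector \<Rightarrow> 'b::complex_normed_vector) \<Longrightarrow> bounded_linear T"
proof -
  assume T: "bounded_op T"
  then obtain K where "\<And>x. norm (T x) \<le> K * norm x" by (auto simp: bounded_op_def)
  then show ?thesis
    using T by (intro bounded_linear_intro[where K=K])
      (auto simp: bounded_op_def clinear_add clinear_scaleR mult.commute)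
qed

lemma bounded_op_scaleR:
  assumes "bounded_op (T::'a::complex_normed_vector \<Rightarrow> 'b::complex_normed_vector)"
  shows "bounded_op (\<lambda>x. r *\<^sub>R T x)"
proof -
  have lin: "clinear_map T" using assms by (rule bounded_op_clinear)
  obtain K where K: "\<And>x. norm (T x) \<le> K * norm x" using assms by (auto simp: bounded_op_def)
  show ?thesis
  proof (rule bounded_op_intro[where K="\<bar>r\<bar> * K"])
    show "r *\<^sub>R T (x + y) = r *\<^sub>R T x + r *\<^sub>R T y" for x y
      by (simp add: clinear_add[OF lin] scaleR_add_right)
    show "r *\<^sub>R T (c *\<^sub>C x) = c *\<^sub>C (r *\<^sub>R T x)" for c x
      by (simp add: clinear_scaleC[OF lin] scaleR_scaleC scaleC_scaleC mult.commute)
    show "norm (r *\<^sub>R T x) \<le> \<bar>r\<bar> * K * norm x" for x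
      using mult_left_mono[OF K[of x], of "\<bar>r\<bar>"] by (simp add: mult.assoc)
  qed
qed

lemma bounded_op_comp:
  assumes A: "bounded_op (A::'b::complex_normed_vector \<Rightarrow> 'c::complex_normed_vector)"
    and B: "bounded_op (B::'a::complex_normed_vector \<Rightarrow> 'b)"
  shows "bounded_op (\<lambda>x. A (B x))"
proof -
  obtain KA where KA: "KA \<ge> 0" "\<And>x. norm (A x) \<le> KA * norm x"
    using bounded_op_nonneg_bound[OF A] by blast
  obtain KB where KB: "\<And>x. norm (B x) \<le> KB * norm x"
    using B by (auto simp: bounded_op_def)
  have "norm (A (B x)) \<le> KA * KB * norm x" for x
    using KA(2)[of "B x"] mult_left_mono[OF KB[of x] KA(1)] by (simp add: mult.assoc)
  then show ?thesis
    using A B by (intro bounded_op_intro) (auto simp: bounded_op_def clinear_add clinear_scaleC)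
qed

lemma bounded_op_sum:
  assumes "\<And>j. j \<in> J \<Longrightarrow> bounded_op (F j :: 'a::complex_normed_vector \<Rightarrow> 'b::complex_normed_vector)"
  shows "bounded_op (\<lambda>x. \<Sum>j\<in>J. F j x)"
proof (cases "finite J")
  case True
  have "\<forall>j\<in>J. \<exists>K. \<forall>x. norm (F j x) \<le> K * norm x"
    using assms by (auto simp: bounded_op_def)
  then obtain K where K: "\<And>j x. j \<in> J \<Longrightarrow> norm (F j x) \<le> K j * norm x"
    by metis
  have "norm (\<Sum>j\<in>J. F j x) \<le> (\<Sum>j\<in>J. K j) * norm x" for x
    using sum_norm_le[of J "\<lambda>j. F j x" "\<lambda>j. K j * norm x"] K by (simp add: sum_distrib_right)
  then show ?thesis
    using assms
    by (intro bounded_op_intro) (auto simp: bounded_op_def clinear_add clinear_scaleC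
        sum.distrib scaleC_sum_right)
next
  case False
  then show ?thesis by (intro bounded_op_intro[where K=0]) auto
qed

section \<open>The Riesz representation theorem and adjoints\<close>

lemma parallelogram_near_minimum:
  fixes x y :: "'a::complex_inner"
  assumes "2 * d \<le> norm (x + y)" "0 \<le> d" "norm x \<le> d + a" "norm y \<le> d + b"
    and "0 \<le> a" "a \<le> 1" "0 \<le> b" "b \<le> 1"
  shows "(norm (x - y))\<^sup>2 \<le> (4 * d + 2) * (a + b)"
proof -
  have "(norm (x - y))\<^sup>2 = 2 * (norm x)\<^sup>2 + 2 * (norm y)\<^sup>2 - (norm (x + y))\<^sup>2"
    by (simp add: power2_norm_add power2_norm_diff)
  also have "\<dots> \<le> 2 * (d + a)\<^sup>2 + 2 * (d + b)\<^sup>2 - (2 * d)\<^sup>2"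
    using assms by (intro diff_mono add_mono mult_left_mono power_mono) auto
  also have "\<dots> = 4 * d * (a + b) + 2 * (a * a + b * b)"
    by (simp add: power2_eq_square algebra_simps)
  also have "\<dots> \<le> (4 * d + 2) * (a + b)"
    using assms mult_left_le[of a a] mult_left_le[of b b] by (simp add: algebra_simps)
  finally show ?thesis .
qed

text \<open>\<open>mid\<close> holds when \<open>d\<close> is the infimum of the norm on a midpoint-convex set
  containing every \<open>xs n\<close>.\<close>
lemma Cauchy_minimizing_sequence:
  fixes xs :: "nat \<Rightarrow> 'a::complex_inner"
  assumes mid: "\<And>m n. 2 * d \<le> norm (xs m + xs n)" and "0 \<le> d"
    and xs: "\<And>n. norm (xs n) < d + inverse (real (Suc n))"
  shows "Cauchy xs"
proof (rule CauchyI)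
  fix e :: real assume e: "0 < e"
  obtain N :: nat where "2 * (4 * d + 2) / e\<^sup>2 < real N"
    using reals_Archimedean2 by blast
  then have "2 * (4 * d + 2) < e\<^sup>2 * real N"
    using e by (simp add: field_simps)
  moreover have "e\<^sup>2 * real N < e\<^sup>2 * real (Suc N)" using e by simp
  ultimately have "2 * (4 * d + 2) < e\<^sup>2 * real (Suc N)" by linarith
  then have N: "(4 * d + 2) * (2 / real (Suc N)) < e\<^sup>2" by (simp add: field_simps)
  have "norm (xs m - xs n) < e" if "N \<le> m" "N \<le> n" for m n
  proof -
    have inv: "inverse (real (Suc m)) \<le> inverse (real (Suc N))" "inverse (real (Suc n)) \<le> inverse (real (Suc N))"
      using that by (simp_all add: field_simps)
    have "(norm (xs m - xs n))\<^sup>2 \<le> (4 * d + 2) * (inverse (real (Suc m)) + inverse (real (Suc n)))"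
      using mid xs[of m] xs[of n] \<open>0 \<le> d\<close>
      by (intro parallelogram_near_minimum) (auto simp: field_simps)
    also have "\<dots> \<le> (4 * d + 2) * (2 / real (Suc N))"
      using add_mono[OF inv] \<open>0 \<le> d\<close> by (intro mult_left_mono) (auto simp: divide_inverse)
    finally show ?thesis using N e by (simp add: power2_less_imp_less)
  qed
  then show "\<exists>M. \<forall>m\<ge>M. \<forall>n\<ge>M. norm (xs m - xs n) < e" by blast
qed

lemma min_norm_on_level_set:
  fixes f :: "'a::chilbert_space \<Rightarrow> complex"
  assumes add: "\<And>x y. f (x + y) = f x + f y" and scale: "\<And>c x. f (c *\<^sub>C x) = c * f x"
    and bound: "\<And>x. cmod (f x) \<le> K * norm x" and "f x0 = 1"
  obtains z where "f z = 1" "\<And>x. f x = 1 \<Longrightarrow> norm z \<le> norm x"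
proof -
  define A where "A = {x. f x = 1}"
  define d where "d = Inf (norm ` A)"
  have "x0 \<in> A" using \<open>f x0 = 1\<close> by (simp add: A_def)
  have d_le: "d \<le> norm x" if "x \<in> A" for x
    unfolding d_def by (rule cInf_lower) (use that in \<open>auto intro: bdd_belowI[of _ 0]\<close>)
  have "0 \<le> d"
    unfolding d_def by (rule cInf_greatest) (use \<open>x0 \<in> A\<close> in auto)
  have "\<exists>x\<in>A. norm x < d + inverse (real (Suc n))" for n
    using cInf_lessD[of "norm ` A" "d + inverse (real (Suc n))"] \<open>x0 \<in> A\<close> by (auto simp: d_def)
  then obtain xs where xs_A: "\<And>n. xs n \<in> A"
    and xs_norm: "\<And>n. norm (xs n) < d + inverse (real (Suc n))"
    by metis
  have "2 * d \<le> norm (xs m + xs n)" for m n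
  proof -
    have "(1/2) *\<^sub>C (xs m + xs n) \<in> A" using xs_A by (simp add: A_def scale add)
    then show ?thesis using d_le by (fastforce simp: norm_scaleC)
  qed
  then have "Cauchy xs" using \<open>0 \<le> d\<close> xs_norm by (rule Cauchy_minimizing_sequence)
  then obtain z where z: "xs \<longlonglongrightarrow> z" using Cauchy_convergent convergent_def by blast
  have "bounded_linear f"
    using add bound
    by (intro bounded_linear_intro[where K=K])
      (auto simp: scaleR_scaleC scale scaleR_conv_of_real mult.commute)
  then have "(\<lambda>n. f (xs n)) \<longlonglongrightarrow> f z" using z by (rule bounded_linear.tendsto)
  then have "f z = 1" using xs_A by (simp add: A_def LIMSEQ_const_iff)
  moreover have "norm z \<le> d"
    using tendsto_norm[OF z] LIMSEQ_inverse_real_of_nat_add[of d] xs_norm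
    by (intro LIMSEQ_le) (auto intro: less_imp_le)
  ultimately show ?thesis using that d_le by (force simp: A_def)
qed

lemma min_norm_on_level_set_orthogonal:
  fixes f :: "'a::complex_inner \<Rightarrow> complex"
  assumes add: "\<And>x y. f (x + y) = f x + f y" and scale: "\<And>c x. f (c *\<^sub>C x) = c * f x"
    and z: "f z = 1" "\<And>x. f x = 1 \<Longrightarrow> norm z \<le> norm x" and "f w = 0"
  shows "cinner z w = 0"
proof (cases "w = 0")
  case False
  define c where "c = cinner z w"
  define t where "t = - (cnj c / complex_of_real ((norm w)\<^sup>2))"
  have "f (z + t *\<^sub>C w) = 1" using z \<open>f w = 0\<close> by (simp add: add scale)
  then have "(norm z)\<^sup>2 \<le> (norm (z + t *\<^sub>C w))\<^sup>2" using z(2) by (simp add: power_mono)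
  also have "\<dots> = (norm z)\<^sup>2 + (cmod t)\<^sup>2 * (norm w)\<^sup>2 + 2 * Re (t * c)"
    by (simp add: power2_norm_add norm_scaleC cinner_scaleC_right c_def power_mult_distrib)
  also have "cmod t = cmod c / (norm w)\<^sup>2"
    by (simp add: t_def norm_divide del: of_real_power)
  also have "(cmod c / (norm w)\<^sup>2)\<^sup>2 * (norm w)\<^sup>2 = (cmod c)\<^sup>2 / (norm w)\<^sup>2"
    using False by (simp add: power2_eq_square)
  also have "t * c = - complex_of_real ((cmod c)\<^sup>2 / (norm w)\<^sup>2)"
  proof -
    have "c * cnj c = complex_of_real ((cmod c)\<^sup>2)" by (rule complex_norm_square[symmetric])
    then show ?thesis by (simp add: t_def field_simps)
  qed
  finally have "(cmod c)\<^sup>2 / (norm w)\<^sup>2 \<le> 0" by simp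
  then show ?thesis using False by (simp add: c_def divide_le_0_iff)
qed simp

lemma riesz_representation:
  fixes f :: "'a::chilbert_space \<Rightarrow> complex"
  assumes add: "\<And>x y. f (x + y) = f x + f y" and scale: "\<And>c x. f (c *\<^sub>C x) = c * f x"
    and bound: "\<And>x. cmod (f x) \<le> K * norm x"
  shows "\<exists>z. \<forall>x. f x = cinner z x"
proof (cases "\<exists>x0. f x0 = 1")
  case True
  then obtain z where z: "f z = 1" "\<And>x. f x = 1 \<Longrightarrow> norm z \<le> norm x"
    using min_norm_on_level_set[OF add scale bound] by metis
  have "z \<noteq> 0" using z(1) scale[of 0 0] by auto
  have "f x = cinner (complex_of_real (inverse ((norm z)\<^sup>2)) *\<^sub>C z) x" for x
  proof -
    have "f (x - f x *\<^sub>C z) = 0"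
      using add[of "x - f x *\<^sub>C z" "f x *\<^sub>C z"] by (simp add: scale z(1))
    then have "cinner z (x - f x *\<^sub>C z) = 0"
      using min_norm_on_level_set_orthogonal[OF add scale z] by blast
    then have "cinner z x = f x * complex_of_real ((norm z)\<^sup>2)"
      by (simp add: cinner_diff_right cinner_scaleC_right cinner_norm)
    then show ?thesis using \<open>z \<noteq> 0\<close> by (simp add: cinner_scaleC_left field_simps)
  qed
  then show ?thesis by blast
next
  case False
  have "f x = 0" for x
  proof (rule ccontr)
    assume "f x \<noteq> 0"
    then have "f ((1 / f x) *\<^sub>C x) = 1" by (simp add: scale)
    then show False using False by blast
  qed
  then show ?thesis by (intro exI[of _ 0]) simp
qed

lemma adjoint_exists:
  fixes T :: "'a::chilbert_space \<Rightarrow> 'b::chilbert_space"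
  assumes "bounded_op T"
  shows "\<exists>S. \<forall>x y. cinner (T x) y = cinner x (S y)"
proof -
  obtain K where K: "\<And>x. norm (T x) \<le> K * norm x" using assms by (auto simp: bounded_op_def)
  have lin: "clinear_map T" using assms by (rule bounded_op_clinear)
  have "\<exists>z. \<forall>x. cinner y (T x) = cinner z x" for y
  proof (rule riesz_representation[where K="norm y * K"])
    show "cmod (cinner y (T x)) \<le> norm y * K * norm x" for x
      using cinner_Cauchy_Schwarz[of y "T x"] mult_left_mono[OF K[of x], of "norm y"]
      by (simp add: mult.assoc)
  qed (simp_all add: clinear_add[OF lin] clinear_scaleC[OF lin] cinner_add_right cinner_scaleC_right)
  then obtain S where S: "\<And>y x. cinner y (T x) = cinner (S y) x" by metis
  have "cinner (T x) y = cinner x (S y)" for x y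
    using S[of y x] cinner_commute[of "T x" y] cinner_commute[of x "S y"] by simp
  then show ?thesis by blast
qed

lemma cinner_adj_right:
  fixes T :: "'a::chilbert_space \<Rightarrow> 'b::chilbert_space"
  assumes "bounded_op T"
  shows "cinner (T x) y = cinner x (adj T y)"
proof -
  obtain S where S: "\<forall>x y. cinner (T x) y = cinner x (S y)"
    using adjoint_exists[OF assms] by blast
  have "adj T = S"
    unfolding adj_def
  proof (rule the_equality)
    fix S' assume S': "\<forall>x y. cinner (T x) y = cinner x (S' y)"
    show "S' = S"
    proof
      fix y
      show "S' y = S y"
        by (rule cinner_extensionality) (use S'[rule_format, of _ y] S[rule_format, of _ y] in simp)
    qed
  qed (rule S)
  then show ?thesis using S by simp
qed

lemma cinner_adj_left:
  fixes T :: "'a::chilbert_space \<Rightarrow> 'b::chilbert_space"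
  shows "bounded_op T \<Longrightarrow> cinner (adj T y) x = cinner y (T x)"
  using cinner_adj_right[of T x y] cinner_commute[of "T x" y] cinner_commute[of x "adj T y"]
  by simp

lemma bounded_op_adj:
  fixes T :: "'a::chilbert_space \<Rightarrow> 'b::chilbert_space"
  assumes T: "bounded_op T"
  shows "bounded_op (adj T)"
proof -
  obtain K where K: "K \<ge> 0" "\<And>x. norm (T x) \<le> K * norm x"
    using bounded_op_nonneg_bound[OF T] by blast
  show ?thesis
  proof (rule bounded_op_intro)
    show "adj T (x + y) = adj T x + adj T y" for x y
      by (rule cinner_extensionality) (simp add: cinner_adj_right[OF T, symmetric] cinner_add_right)
    show "adj T (c *\<^sub>C x) = c *\<^sub>C adj T x" for c x
      by (rule cinner_extensionality) (simp add: cinner_adj_right[OF T, symmetric] cinner_scaleC_right)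
    show "norm (adj T y) \<le> K * norm y" for y
    proof -
      have "norm (adj T y) * norm (adj T y) = Re (cinner (T (adj T y)) y)"
        by (simp add: cinner_adj_right[OF T] Re_cinner_self power2_eq_square)
      also have "\<dots> \<le> norm (T (adj T y)) * norm y" by (rule Re_cinner_le)
      also have "\<dots> \<le> norm (adj T y) * (K * norm y)"
        using mult_right_mono[OF K(2)[of "adj T y"] norm_ge_zero[of y]] by (simp add: mult_ac)
      finally show ?thesis using K(1)
        by (cases "adj T y = 0") (auto simp: mult_le_cancel_left)
    qed
  qed
qed

lemma adj_adj:
  fixes T :: "'a::chilbert_space \<Rightarrow> 'b::chilbert_space"
  assumes "bounded_op T"
  shows "adj (adj T) = T"
proof
  fix x
  show "adj (adj T) x = T x"
    by (rule cinner_extensionality)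
      (simp add: cinner_adj_right[OF bounded_op_adj[OF assms], symmetric] cinner_adj_left[OF assms])
qed

section \<open>Operator matrices acting on finite direct sums\<close>

text \<open>A vector of \<open>H\<^sup>p\<close> is a function \<open>nat \<Rightarrow> H\<close> of which only the first \<open>p\<close> values matter;
  an \<open>m \<times> p\<close> operator matrix acts on it as an operator \<open>H\<^sup>p \<rightarrow> K\<^sup>m\<close>.\<close>

definition vec_norm :: "nat \<Rightarrow> (nat \<Rightarrow> 'a::complex_normed_vector) \<Rightarrow> real" where
  "vec_norm p x = sqrt (\<Sum>j<p. (norm (x j))\<^sup>2)"

definition vec_inner :: "nat \<Rightarrow> (nat \<Rightarrow> 'a::complex_inner) \<Rightarrow> (nat \<Rightarrow> 'a) \<Rightarrow> complex" where
  "vec_inner p x y = (\<Sum>j<p. cinner (x j) (y j))"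

definition mat_apply ::
  "nat \<Rightarrow> (nat \<Rightarrow> nat \<Rightarrow> ('a \<Rightarrow> 'b::comm_monoid_add)) \<Rightarrow> (nat \<Rightarrow> 'a) \<Rightarrow> nat \<Rightarrow> 'b" where
  "mat_apply p X h = (\<lambda>i. \<Sum>j<p. X i j (h j))"

definition mat_bounded ::
  "nat \<Rightarrow> nat \<Rightarrow> (nat \<Rightarrow> nat \<Rightarrow> ('a::complex_normed_vector \<Rightarrow> 'b::complex_normed_vector)) \<Rightarrow> bool"
  where "mat_bounded m p X \<longleftrightarrow> (\<forall>i<m. \<forall>j<p. bounded_op (X i j))"

lemma vec_norm_nonneg [simp]: "0 \<le> vec_norm p x"
  by (simp add: vec_norm_def sum_nonneg)

lemma power2_vec_norm: "(vec_norm p x)\<^sup>2 = (\<Sum>j<p. (norm (x j))\<^sup>2)"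
  by (simp add: vec_norm_def sum_nonneg)

lemma vec_norm_eq_L2_set: "vec_norm p x = L2_set (\<lambda>j. norm (x j)) {..<p}"
  by (simp add: vec_norm_def L2_set_def)

lemma vec_norm_cong: "(\<And>j. j < p \<Longrightarrow> x j = y j) \<Longrightarrow> vec_norm p x = vec_norm p y"
  by (simp add: vec_norm_def)

lemma vec_inner_cong: "(\<And>j. j < p \<Longrightarrow> x j = y j) \<Longrightarrow> vec_inner p x z = vec_inner p y z"
  by (simp add: vec_inner_def)

lemma norm_le_vec_norm: "j < p \<Longrightarrow> norm (x j) \<le> vec_norm p x"
  unfolding vec_norm_eq_L2_set by (rule member_le_L2_set) auto

lemma vec_norm_scaleR: "vec_norm p (\<lambda>j. r *\<^sub>R x j) = \<bar>r\<bar> * vec_norm p x"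
  by (simp add: vec_norm_def power_mult_distrib sum_distrib_left[symmetric] real_sqrt_mult)

lemma vec_inner_self: "vec_inner p x x = complex_of_real ((vec_norm p x)\<^sup>2)"
  by (simp add: vec_inner_def power2_vec_norm cinner_norm)

lemma vec_inner_commute: "vec_inner p x y = cnj (vec_inner p y x)"
  by (simp add: vec_inner_def cinner_commute[of "x _"])

lemma vec_inner_diff_left: "vec_inner p (\<lambda>j. x j - y j) z = vec_inner p x z - vec_inner p y z"
  by (simp add: vec_inner_def cinner_diff_left sum_subtractf)

lemma vec_inner_diff_right: "vec_inner p z (\<lambda>j. x j - y j) = vec_inner p z x - vec_inner p z y"
  by (simp add: vec_inner_def cinner_diff_right sum_subtractf)

lemma vec_inner_scaleR_left:
  "vec_inner p (\<lambda>j. r *\<^sub>R x j) y = complex_of_real r * vec_inner p x y"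
  by (simp add: vec_inner_def scaleC_of_real[symmetric] cinner_scaleC_left sum_distrib_left)

lemma vec_inner_scaleR_right:
  "vec_inner p y (\<lambda>j. r *\<^sub>R x j) = complex_of_real r * vec_inner p y x"
  by (simp add: vec_inner_def scaleC_of_real[symmetric] cinner_scaleC_right sum_distrib_left)

lemma Re_vec_inner_le: "Re (vec_inner p x y) \<le> vec_norm p x * vec_norm p y"
proof -
  have "Re (vec_inner p x y) \<le> cmod (vec_inner p x y)" by (rule complex_Re_le_cmod)
  also have "\<dots> \<le> (\<Sum>j<p. cmod (cinner (x j) (y j)))"
    unfolding vec_inner_def by (rule norm_sum)
  also have "\<dots> \<le> (\<Sum>j<p. \<bar>norm (x j)\<bar> * \<bar>norm (y j)\<bar>)"
    by (intro sum_mono) (simp add: cinner_Cauchy_Schwarz)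
  also have "\<dots> \<le> vec_norm p x * vec_norm p y"
    unfolding vec_norm_eq_L2_set by (rule L2_set_mult_ineq)
  finally show ?thesis .
qed

lemma power2_vec_norm_diff:
  "(vec_norm p (\<lambda>j. x j - y j))\<^sup>2 =
    (vec_norm p x)\<^sup>2 + (vec_norm p y)\<^sup>2 - 2 * Re (vec_inner p x y)"
  by (simp add: power2_vec_norm vec_inner_def power2_norm_diff sum.distrib sum_subtractf
      sum_distrib_left)

lemma mat_bounded_clinear: "mat_bounded m p X \<Longrightarrow> i < m \<Longrightarrow> j < p \<Longrightarrow> clinear_map (X i j)"
  by (simp add: mat_bounded_def bounded_op_def)

lemma mat_apply_cong: "(\<And>j. j < p \<Longrightarrow> x j = y j) \<Longrightarrow> mat_apply p X x = mat_apply p X y"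
  by (simp add: mat_apply_def)

lemma mat_apply_scaleR:
  "mat_bounded m p X \<Longrightarrow> i < m \<Longrightarrow> mat_apply p X (\<lambda>j. r *\<^sub>R h j) i = r *\<^sub>R mat_apply p X h i"
  by (simp add: mat_apply_def mat_bounded_clinear clinear_scaleR scaleR_sum_right)

lemma mat_apply_bounded:
  assumes "mat_bounded m p X"
  obtains K where "\<And>h. vec_norm m (mat_apply p X h) \<le> K * vec_norm p h"
proof -
  have "\<exists>K. \<forall>x. norm (X i j x) \<le> K * norm x" if "i < m" "j < p" for i j
    using assms that by (simp add: mat_bounded_def bounded_op_def)
  then obtain K where K: "\<And>i j x. i < m \<Longrightarrow> j < p \<Longrightarrow> norm (X i j x) \<le> K i j * norm x"
    by metis
  have "vec_norm m (mat_apply p X h) \<le> (\<Sum>i<m. \<Sum>j<p. \<bar>K i j\<bar>) * vec_norm p h" for h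
  proof -
    have "vec_norm m (mat_apply p X h) \<le> (\<Sum>i<m. norm (mat_apply p X h i))"
      unfolding vec_norm_eq_L2_set by (rule L2_set_le_sum) simp
    also have "\<dots> \<le> (\<Sum>i<m. \<Sum>j<p. \<bar>K i j\<bar> * vec_norm p h)"
      unfolding mat_apply_def
    proof (intro sum_mono sum_norm_le)
      fix i j assume "i \<in> {..<m}" "j \<in> {..<p}"
      then have "norm (X i j (h j)) \<le> \<bar>K i j\<bar> * norm (h j)"
        using K[of i j "h j"] mult_right_mono[OF abs_ge_self[of "K i j"] norm_ge_zero[of "h j"]]
        by simp
      also have "\<dots> \<le> \<bar>K i j\<bar> * vec_norm p h"
        using \<open>j \<in> {..<p}\<close> by (intro mult_left_mono norm_le_vec_norm) auto
      finally show "norm (X i j (h j)) \<le> \<bar>K i j\<bar> * vec_norm p h" .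
    qed
    finally show ?thesis by (simp add: sum_distrib_right)
  qed
  then show ?thesis by (rule that)
qed

lemma mat_norm_eq_Sup:
  "mat_norm m p X = Sup {vec_norm m (mat_apply p X h) | h. vec_norm p h \<le> 1}"
  by (simp add: mat_norm_def vec_norm_def mat_apply_def)

lemma mat_norm_bdd_above:
  assumes "mat_bounded m p X"
  shows "bdd_above {vec_norm m (mat_apply p X h) | h. vec_norm p h \<le> 1}"
proof -
  obtain K where K: "\<And>h. vec_norm m (mat_apply p X h) \<le> K * vec_norm p h"
    using mat_apply_bounded[OF assms] by blast
  show ?thesis
  proof (rule bdd_aboveI[of _ "max K 0"], clarify)
    fix h :: "nat \<Rightarrow> 'a" assume "vec_norm p h \<le> 1"
    then have "max K 0 * vec_norm p h \<le> max K 0" by (intro mult_left_le) auto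
    moreover have "K * vec_norm p h \<le> max K 0 * vec_norm p h" by (intro mult_right_mono) auto
    ultimately show "vec_norm m (mat_apply p X h) \<le> max K 0" using K[of h] by linarith
  qed
qed

lemma mat_norm_nonneg:
  assumes "mat_bounded m p X"
  shows "0 \<le> mat_norm m p X"
proof -
  have "vec_norm p (\<lambda>_. 0::'a) \<le> 1" by (simp add: vec_norm_def)
  then have "vec_norm m (mat_apply p X (\<lambda>_. 0)) \<in> {vec_norm m (mat_apply p X h) | h. vec_norm p h \<le> 1}"
    by blast
  then show ?thesis
    unfolding mat_norm_eq_Sup by (rule cSup_upper2) (simp_all add: mat_norm_bdd_above[OF assms])
qed

lemma mat_norm_bound:
  assumes X: "mat_bounded m p X"
  shows "vec_norm m (mat_apply p X h) \<le> mat_norm m p X * vec_norm p h"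
proof (cases "vec_norm p h = 0")
  case True
  obtain K where "\<And>h. vec_norm m (mat_apply p X h) \<le> K * vec_norm p h"
    using mat_apply_bounded[OF X] by blast
  then show ?thesis using True vec_norm_nonneg[of m "mat_apply p X h"] by (metis mult_zero_right)
next
  case False
  then have pos: "0 < vec_norm p h" using vec_norm_nonneg[of p h] by linarith
  define h' where "h' = (\<lambda>j. inverse (vec_norm p h) *\<^sub>R h j)"
  have "vec_norm p h' = 1" using pos by (simp add: h'_def vec_norm_scaleR)
  then have "vec_norm m (mat_apply p X h') \<le> mat_norm m p X"
    unfolding mat_norm_eq_Sup by (intro cSup_upper mat_norm_bdd_above[OF X]) auto
  moreover have "vec_norm m (mat_apply p X h') = inverse (vec_norm p h) * vec_norm m (mat_apply p X h)"
  proof -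
    have "vec_norm m (mat_apply p X h') = vec_norm m (\<lambda>i. inverse (vec_norm p h) *\<^sub>R mat_apply p X h i)"
      by (rule vec_norm_cong) (simp add: h'_def mat_apply_scaleR[OF X])
    then show ?thesis using pos by (simp add: vec_norm_scaleR)
  qed
  ultimately show ?thesis using pos by (simp add: field_simps)
qed

lemma mat_norm_bound_unit:
  "mat_bounded m p X \<Longrightarrow> vec_norm p h \<le> 1 \<Longrightarrow> vec_norm m (mat_apply p X h) \<le> mat_norm m p X"
  using mat_norm_bound[of m p X h] mult_left_le[of "vec_norm p h" "mat_norm m p X"] mat_norm_nonneg
  by fastforce

lemma mat_norm_le_unit:
  assumes "\<And>h. vec_norm p h \<le> 1 \<Longrightarrow> vec_norm m (mat_apply p X h) \<le> c"
  shows "mat_norm m p X \<le> c"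
  unfolding mat_norm_eq_Sup
proof (rule cSup_least)
  show "{vec_norm m (mat_apply p X h) |h. vec_norm p h \<le> 1} \<noteq> {}"
    by (auto intro!: exI[of _ "\<lambda>_. 0"] simp: vec_norm_def)
qed (use assms in blast)

lemma mat_norm_le:
  assumes "0 \<le> c" and "\<And>h. vec_norm m (mat_apply p X h) \<le> c * vec_norm p h"
  shows "mat_norm m p X \<le> c"
proof (rule mat_norm_le_unit)
  fix h :: "nat \<Rightarrow> 'a" assume "vec_norm p h \<le> 1"
  then show "vec_norm m (mat_apply p X h) \<le> c"
    using assms(2)[of h] mult_left_le[OF _ assms(1)] by (meson order_trans)
qed

lemma mat_norm_cong:
  assumes "\<And>i j. i < m \<Longrightarrow> j < p \<Longrightarrow> X i j = Y i j"
  shows "mat_norm m p X = mat_norm m p Y"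
proof -
  have "vec_norm m (mat_apply p X h) = vec_norm m (mat_apply p Y h)" for h
    by (rule vec_norm_cong) (simp add: mat_apply_def assms)
  then show ?thesis by (simp add: mat_norm_eq_Sup)
qed

lemma norm_entry_le_mat_norm:
  assumes X: "mat_bounded m p X" and "i < m" "k < p"
  shows "norm (X i k x) \<le> mat_norm m p X * norm x"
proof -
  define e where "e = (\<lambda>j. if j = k then x else 0)"
  have "mat_apply p X e i = X i k x"
    using assms by (simp add: mat_apply_def e_def mat_bounded_clinear clinear_zero if_distrib
        sum.delta' cong: if_cong)
  moreover have "vec_norm p e = norm x"
  proof -
    have "(\<Sum>j<p. (norm (e j))\<^sup>2) = (norm x)\<^sup>2"
      using assms by (simp add: e_def if_distrib[of "\<lambda>v. (norm v)\<^sup>2"] sum.delta' cong: if_cong)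
    then show ?thesis by (simp add: vec_norm_def)
  qed
  ultimately show ?thesis
    using norm_le_vec_norm[OF \<open>i < m\<close>, of "mat_apply p X e"] mat_norm_bound[OF X, of e] by simp
qed

definition mat_mult ::
  "nat \<Rightarrow> (nat \<Rightarrow> nat \<Rightarrow> ('b \<Rightarrow> 'c::comm_monoid_add)) \<Rightarrow> (nat \<Rightarrow> nat \<Rightarrow> ('a \<Rightarrow> 'b)) \<Rightarrow>
    nat \<Rightarrow> nat \<Rightarrow> ('a \<Rightarrow> 'c)" where
  "mat_mult q A B = (\<lambda>i k x. \<Sum>j<q. A i j (B j k x))"

definition mat_adj ::
  "(nat \<Rightarrow> nat \<Rightarrow> ('a::chilbert_space \<Rightarrow> 'b::chilbert_space)) \<Rightarrow> nat \<Rightarrow> nat \<Rightarrow> ('b \<Rightarrow> 'a)" where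
  "mat_adj A = (\<lambda>i j. adj (A j i))"

lemma mat_bounded_mult:
  assumes "mat_bounded m q A" "mat_bounded q p B"
  shows "mat_bounded m p (mat_mult q A B)"
  unfolding mat_bounded_def mat_mult_def
proof (intro allI impI bounded_op_sum)
  fix i k j assume "i < m" "k < p" "j \<in> {..<q}"
  then have "bounded_op (A i j)" "bounded_op (B j k)" using assms by (auto simp: mat_bounded_def)
  then show "bounded_op (\<lambda>x. A i j (B j k x))" by (rule bounded_op_comp)
qed

lemma mat_apply_mult:
  assumes "mat_bounded m q A" "i < m"
  shows "mat_apply p (mat_mult q A B) h i = mat_apply q A (mat_apply p B h) i"
proof -
  have "mat_apply p (mat_mult q A B) h i = (\<Sum>k<p. \<Sum>j<q. A i j (B j k (h k)))"
    by (simp add: mat_apply_def mat_mult_def)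
  also have "\<dots> = (\<Sum>j<q. \<Sum>k<p. A i j (B j k (h k)))" by (rule sum.swap)
  also have "\<dots> = mat_apply q A (mat_apply p B h) i"
    using assms by (simp add: mat_apply_def mat_bounded_clinear clinear_sum)
  finally show ?thesis .
qed

lemma mat_norm_mult_le:
  assumes A: "mat_bounded m q A" and B: "mat_bounded q p B"
  shows "mat_norm m p (mat_mult q A B) \<le> mat_norm m q A * mat_norm q p B"
proof (rule mat_norm_le)
  show "0 \<le> mat_norm m q A * mat_norm q p B" using mat_norm_nonneg[OF A] mat_norm_nonneg[OF B] by simp
  fix h
  have "vec_norm m (mat_apply p (mat_mult q A B) h) = vec_norm m (mat_apply q A (mat_apply p B h))"
    by (rule vec_norm_cong) (simp add: mat_apply_mult[OF A])
  also have "\<dots> \<le> mat_norm m q A * vec_norm q (mat_apply p B h)" by (rule mat_norm_bound[OF A])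
  also have "\<dots> \<le> mat_norm m q A * (mat_norm q p B * vec_norm p h)"
    by (rule mult_left_mono[OF mat_norm_bound[OF B] mat_norm_nonneg[OF A]])
  finally show "vec_norm m (mat_apply p (mat_mult q A B) h) \<le> mat_norm m q A * mat_norm q p B * vec_norm p h"
    by (simp add: mult.assoc)
qed

lemma mat_bounded_adj: "mat_bounded m p A \<Longrightarrow> mat_bounded p m (mat_adj A)"
  by (simp add: mat_bounded_def mat_adj_def bounded_op_adj)

lemma mat_adj_adj: "mat_bounded m p A \<Longrightarrow> i < m \<Longrightarrow> j < p \<Longrightarrow> mat_adj (mat_adj A) i j = A i j"
  by (simp add: mat_adj_def mat_bounded_def adj_adj)

lemma vec_inner_mat_adj:
  assumes A: "mat_bounded m p A"
  shows "vec_inner m (mat_apply p A h) y = vec_inner p h (mat_apply m (mat_adj A) y)"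
proof -
  have "vec_inner m (mat_apply p A h) y = (\<Sum>i<m. \<Sum>j<p. cinner (A i j (h j)) (y i))"
    by (simp add: vec_inner_def mat_apply_def cinner_sum_left)
  also have "\<dots> = (\<Sum>i<m. \<Sum>j<p. cinner (h j) (adj (A i j) (y i)))"
    using A by (intro sum.cong refl) (simp add: mat_bounded_def cinner_adj_right)
  also have "\<dots> = (\<Sum>j<p. \<Sum>i<m. cinner (h j) (adj (A i j) (y i)))" by (rule sum.swap)
  also have "\<dots> = vec_inner p h (mat_apply m (mat_adj A) y)"
    by (simp add: vec_inner_def mat_apply_def mat_adj_def cinner_sum_right)
  finally show ?thesis .
qed

lemma mat_norm_adj_le:
  assumes A: "mat_bounded m p A"
  shows "mat_norm p m (mat_adj A) \<le> mat_norm m p A"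
proof (rule mat_norm_le)
  show "0 \<le> mat_norm m p A" by (rule mat_norm_nonneg[OF A])
  fix y
  define z where "z = mat_apply m (mat_adj A) y"
  have "vec_norm p z * vec_norm p z = Re (vec_inner m (mat_apply p A z) y)"
    by (simp add: vec_inner_mat_adj[OF A] z_def vec_inner_self power2_eq_square)
  also have "\<dots> \<le> vec_norm m (mat_apply p A z) * vec_norm m y" by (rule Re_vec_inner_le)
  also have "\<dots> \<le> vec_norm p z * (mat_norm m p A * vec_norm m y)"
    using mult_right_mono[OF mat_norm_bound[OF A, of z] vec_norm_nonneg[of m y]] by (simp add: mult_ac)
  finally show "vec_norm p z \<le> mat_norm m p A * vec_norm m y"
    using mat_norm_nonneg[OF A] vec_norm_nonneg[of p z]
    by (cases "vec_norm p z = 0") (auto simp: mult_le_cancel_left)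
qed

lemma mat_norm_adj:
  assumes A: "mat_bounded m p A"
  shows "mat_norm p m (mat_adj A) = mat_norm m p A"
proof (rule antisym)
  have "mat_norm m p A = mat_norm m p (mat_adj (mat_adj A))"
    by (rule mat_norm_cong) (simp add: mat_adj_adj[OF A])
  also have "\<dots> \<le> mat_norm p m (mat_adj A)"
    by (rule mat_norm_adj_le[OF mat_bounded_adj[OF A]])
  finally show "mat_norm m p A \<le> mat_norm p m (mat_adj A)" .
qed (rule mat_norm_adj_le[OF A])

definition mat_triple ::
  "nat \<Rightarrow> nat \<Rightarrow> (nat \<Rightarrow> nat \<Rightarrow> ('a::chilbert_space \<Rightarrow> 'b::chilbert_space)) \<Rightarrow>
    (nat \<Rightarrow> nat \<Rightarrow> ('a \<Rightarrow> 'b)) \<Rightarrow> (nat \<Rightarrow> nat \<Rightarrow> ('a \<Rightarrow> 'b)) \<Rightarrow> nat \<Rightarrow> nat \<Rightarrow> ('a \<Rightarrow> 'b)"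
  where "mat_triple n p A B C = mat_mult p A (mat_mult n (mat_adj B) C)"

lemma mat_triple_entry:
  assumes "mat_bounded n p A" "i < n"
  shows "mat_triple n p A B C i k x = (\<Sum>j<p. \<Sum>l<n. A i j (adj (B l j) (C l k x)))"
  using assms by (simp add: mat_triple_def mat_mult_def mat_adj_def mat_bounded_clinear clinear_sum)

lemma mat_bounded_triple:
  "mat_bounded n p A \<Longrightarrow> mat_bounded n p B \<Longrightarrow> mat_bounded n p C \<Longrightarrow>
    mat_bounded n p (mat_triple n p A B C)"
  unfolding mat_triple_def by (intro mat_bounded_mult mat_bounded_adj)

lemma mat_apply_triple:
  assumes "mat_bounded n p A" "mat_bounded n p B" "i < n"
  shows "mat_apply p (mat_triple n p A B C) h i =
    mat_apply p A (mat_apply n (mat_adj B) (mat_apply p C h)) i"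
proof -
  have "mat_apply p (mat_mult n (mat_adj B) C) h j = mat_apply n (mat_adj B) (mat_apply p C h) j"
    if "j < p" for j
    by (rule mat_apply_mult[OF mat_bounded_adj[OF assms(2)] that])
  then have "mat_apply p A (mat_apply p (mat_mult n (mat_adj B) C) h) =
      mat_apply p A (mat_apply n (mat_adj B) (mat_apply p C h))"
    by (rule mat_apply_cong)
  then show ?thesis
    unfolding mat_triple_def by (simp add: mat_apply_mult[OF assms(1,3)])
qed

lemma mat_norm_triple_le:
  assumes A: "mat_bounded n p A" and B: "mat_bounded n p B" and C: "mat_bounded n p C"
  shows "mat_norm n p (mat_triple n p A B C) \<le> mat_norm n p A * mat_norm n p B * mat_norm n p C"
proof -
  have B': "mat_bounded p n (mat_adj B)" by (rule mat_bounded_adj[OF B])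
  have "mat_norm n p (mat_triple n p A B C) \<le> mat_norm n p A * mat_norm p p (mat_mult n (mat_adj B) C)"
    unfolding mat_triple_def by (rule mat_norm_mult_le[OF A mat_bounded_mult[OF B' C]])
  also have "\<dots> \<le> mat_norm n p A * (mat_norm p n (mat_adj B) * mat_norm n p C)"
    by (rule mult_left_mono[OF mat_norm_mult_le[OF B' C] mat_norm_nonneg[OF A]])
  finally show ?thesis by (simp add: mat_norm_adj[OF B] mult.assoc)
qed

lemma TRO_bounded: "is_TRO U \<Longrightarrow> u \<in> U \<Longrightarrow> bounded_op u"
  unfolding is_TRO_def by blast

lemma TRO_zero: "is_TRO U \<Longrightarrow> (\<lambda>_. 0) \<in> U"
  unfolding is_TRO_def by blast

lemma TRO_add: "is_TRO U \<Longrightarrow> S \<in> U \<Longrightarrow> T \<in> U \<Longrightarrow> (\<lambda>x. S x + T x) \<in> U"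
  unfolding is_TRO_def by blast

lemma TRO_scaleC: "is_TRO U \<Longrightarrow> T \<in> U \<Longrightarrow> (\<lambda>x. c *\<^sub>C T x) \<in> U"
  unfolding is_TRO_def by blast

lemma TRO_limit:
  "is_TRO U \<Longrightarrow> (\<And>k. s k \<in> U) \<Longrightarrow> bounded_op T \<Longrightarrow>
    (\<lambda>k. op_norm (\<lambda>x. s k x - T x)) \<longlonglongrightarrow> 0 \<Longrightarrow> T \<in> U"
  unfolding is_TRO_def by blast

lemma TRO_triple:
  "is_TRO U \<Longrightarrow> R \<in> U \<Longrightarrow> S \<in> U \<Longrightarrow> T \<in> U \<Longrightarrow> (\<lambda>x. R (adj S (T x))) \<in> U"
  unfolding is_TRO_def comp_def by blast

lemma TRO_sum:
  assumes U: "is_TRO U" and "finite I" and "\<And>i. i \<in> I \<Longrightarrow> F i \<in> U"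
  shows "(\<lambda>x. \<Sum>i\<in>I. F i x) \<in> U"
  using assms(2,3)
proof (induction I rule: finite_induct)
  case empty
  then show ?case using TRO_zero[OF U] by simp
next
  case (insert a I)
  then show ?case using TRO_add[OF U, of "F a" "\<lambda>x. \<Sum>i\<in>I. F i x"] by simp
qed

lemma mat_bounded_TRO: "is_TRO U \<Longrightarrow> \<forall>i<n. \<forall>k<p. X i k \<in> U \<Longrightarrow> mat_bounded n p X"
  by (simp add: mat_bounded_def TRO_bounded)

lemma TRO_mat_triple:
  assumes U: "is_TRO U" and "\<forall>i<n. \<forall>k<p. A i k \<in> U" "\<forall>i<n. \<forall>k<p. B i k \<in> U"
    "\<forall>i<n. \<forall>k<p. C i k \<in> U"
  shows "\<forall>i<n. \<forall>k<p. mat_triple n p A B C i k \<in> U"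
proof (intro allI impI)
  fix i k assume "i < n" "k < p"
  have "(\<lambda>x. \<Sum>j<p. \<Sum>l<n. A i j (adj (B l j) (C l k x))) \<in> U"
    using assms \<open>i < n\<close> \<open>k < p\<close> by (auto intro!: TRO_sum[OF U] TRO_triple[OF U])
  moreover have "mat_triple n p A B C i k = (\<lambda>x. \<Sum>j<p. \<Sum>l<n. A i j (adj (B l j) (C l k x)))"
    using mat_triple_entry[OF mat_bounded_TRO[OF U assms(2)] \<open>i < n\<close>] by (simp add: fun_eq_iff)
  ultimately show "mat_triple n p A B C i k \<in> U" by simp
qed

lemma ternary_morphism_bounded: "ternary_morphism U \<phi> \<Longrightarrow> u \<in> U \<Longrightarrow> bounded_op (\<phi> u)"
  unfolding ternary_morphism_def by blast

lemma ternary_morphism_add: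
  "ternary_morphism U \<phi> \<Longrightarrow> u \<in> U \<Longrightarrow> v \<in> U \<Longrightarrow> \<phi> (\<lambda>x. u x + v x) = (\<lambda>x. \<phi> u x + \<phi> v x)"
  unfolding ternary_morphism_def by blast

lemma ternary_morphism_scaleC:
  "ternary_morphism U \<phi> \<Longrightarrow> u \<in> U \<Longrightarrow> \<phi> (\<lambda>x. c *\<^sub>C u x) = (\<lambda>x. c *\<^sub>C \<phi> u x)"
  unfolding ternary_morphism_def by blast

lemma ternary_morphism_triple:
  "ternary_morphism U \<phi> \<Longrightarrow> R \<in> U \<Longrightarrow> S \<in> U \<Longrightarrow> T \<in> U \<Longrightarrow>
    \<phi> (\<lambda>x. R (adj S (T x))) = (\<lambda>x. \<phi> R (adj (\<phi> S) (\<phi> T x)))"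
  unfolding ternary_morphism_def comp_def by blast

lemma ternary_morphism_sum:
  assumes U: "is_TRO U" and \<phi>: "ternary_morphism U \<phi>"
    and "finite I" and "\<And>i. i \<in> I \<Longrightarrow> F i \<in> U"
  shows "\<phi> (\<lambda>x. \<Sum>i\<in>I. F i x) = (\<lambda>x. \<Sum>i\<in>I. \<phi> (F i) x)"
  using assms(3,4)
proof (induction I rule: finite_induct)
  case empty
  have "\<phi> (\<lambda>_. 0) = (\<lambda>x. \<phi> (\<lambda>_. 0) x + \<phi> (\<lambda>_. 0) x)"
    using ternary_morphism_add[OF \<phi> TRO_zero[OF U] TRO_zero[OF U]] by simp
  then show ?case by (simp add: fun_eq_iff)
next
  case (insert a I)
  have "(\<lambda>x. \<Sum>i\<in>I. F i x) \<in> U" using insert by (intro TRO_sum[OF U]) auto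
  then show ?case
    using insert ternary_morphism_add[OF \<phi>, of "F a" "\<lambda>x. \<Sum>i\<in>I. F i x"] by simp
qed

lemma ternary_morphism_mat_triple:
  assumes U: "is_TRO U" and \<phi>: "ternary_morphism U \<phi>"
    and A: "\<forall>i<n. \<forall>k<p. A i k \<in> U" and B: "\<forall>i<n. \<forall>k<p. B i k \<in> U"
    and C: "\<forall>i<n. \<forall>k<p. C i k \<in> U" and "i < n" "k < p"
  shows "\<phi> (mat_triple n p A B C i k) =
    mat_triple n p (\<lambda>i k. \<phi> (A i k)) (\<lambda>i k. \<phi> (B i k)) (\<lambda>i k. \<phi> (C i k)) i k"
proof -
  have \<phi>A: "mat_bounded n p (\<lambda>i k. \<phi> (A i k))"
    using A by (simp add: mat_bounded_def ternary_morphism_bounded[OF \<phi>])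
  have "mat_triple n p A B C i k = (\<lambda>x. \<Sum>j<p. \<Sum>l<n. A i j (adj (B l j) (C l k x)))"
    using mat_triple_entry[OF mat_bounded_TRO[OF U A] \<open>i < n\<close>] by (simp add: fun_eq_iff)
  then have "\<phi> (mat_triple n p A B C i k) = \<phi> (\<lambda>x. \<Sum>j<p. \<Sum>l<n. A i j (adj (B l j) (C l k x)))"
    by (rule arg_cong)
  also have "\<dots> = (\<lambda>x. \<Sum>j<p. \<Sum>l<n. \<phi> (\<lambda>x. A i j (adj (B l j) (C l k x))) x)"
  proof -
    have entry: "(\<lambda>x. A i j (adj (B l j) (C l k x))) \<in> U" if "j < p" "l < n" for j l
      using assms that by (intro TRO_triple[OF U]) auto
    have row: "\<phi> (\<lambda>x. \<Sum>l<n. A i j (adj (B l j) (C l k x))) =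
        (\<lambda>x. \<Sum>l<n. \<phi> (\<lambda>x. A i j (adj (B l j) (C l k x))) x)" if "j < p" for j
      using ternary_morphism_sum[OF U \<phi>, of "{..<n}" "\<lambda>l x. A i j (adj (B l j) (C l k x))"]
        entry that by simp
    have "(\<lambda>x. \<Sum>l<n. A i j (adj (B l j) (C l k x))) \<in> U" if "j < p" for j
      using entry that by (intro TRO_sum[OF U]) auto
    then show ?thesis
      using ternary_morphism_sum[OF U \<phi>, of "{..<p}" "\<lambda>j x. \<Sum>l<n. A i j (adj (B l j) (C l k x))"]
      by (simp add: row)
  qed
  also have "\<dots> = (\<lambda>x. \<Sum>j<p. \<Sum>l<n. \<phi> (A i j) (adj (\<phi> (B l j)) (\<phi> (C l k) x)))"
    using assms by (simp add: ternary_morphism_triple[OF \<phi>])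
  also have "\<dots> = mat_triple n p (\<lambda>i k. \<phi> (A i k)) (\<lambda>i k. \<phi> (B i k)) (\<lambda>i k. \<phi> (C i k)) i k"
    using mat_triple_entry[OF \<phi>A \<open>i < n\<close>] by (simp add: fun_eq_iff)
  finally show ?thesis .
qed

section \<open>Geometric series of operators\<close>

lemma op_norm_le:
  assumes "0 \<le> c" and "\<And>x. norm (T x) \<le> c * norm x"
  shows "op_norm T \<le> c"
  unfolding op_norm_def
proof (rule cSup_least)
  show "{norm (T x) |x. norm x \<le> 1} \<noteq> {}" by (auto intro!: exI[of _ 0])
  show "y \<le> c" if "y \<in> {norm (T x) |x. norm x \<le> 1}" for y
    using that assms by (auto intro: order_trans mult_left_le)
qed

lemma op_norm_nonneg:
  assumes "\<And>x. norm (T x) \<le> c * norm x"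
  shows "0 \<le> op_norm T"
  unfolding op_norm_def
proof (rule cSup_upper2)
  show "norm (T 0) \<in> {norm (T x) |x. norm x \<le> 1}" by auto
  show "bdd_above {norm (T x) |x. norm x \<le> 1}"
  proof (rule bdd_aboveI[of _ "\<bar>c\<bar>"], clarify)
    fix x :: 'a assume "norm x \<le> 1"
    then have "\<bar>c\<bar> * norm x \<le> \<bar>c\<bar>" by (intro mult_left_le) auto
    moreover have "c * norm x \<le> \<bar>c\<bar> * norm x" by (intro mult_right_mono) auto
    ultimately show "norm (T x) \<le> \<bar>c\<bar>" using assms[of x] by linarith
  qed
qed simp

lemma geometric_bound_summable_tail:
  fixes c :: "nat \<Rightarrow> 'a::banach"
  assumes c: "\<And>m. norm (c m) \<le> B * q ^ m" and q: "0 \<le> q" "q < 1"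
  shows "summable c" and "norm (suminf c - (\<Sum>m<N. c m)) \<le> B * q ^ N / (1 - q)"
proof -
  have geom: "summable (\<lambda>m. q ^ m)" using q by (simp add: summable_geometric)
  have norm_summable: "summable (\<lambda>m. norm (c m))"
    by (rule summable_comparison_test[OF _ summable_mult[OF geom, of B]]) (use c in auto)
  then show "summable c" by (rule summable_norm_cancel)
  have tail: "summable (\<lambda>m. norm (c (m + N)))"
    using summable_ignore_initial_segment[OF norm_summable, of N] by simp
  have "suminf c - (\<Sum>m<N. c m) = (\<Sum>m. c (m + N))"
    using suminf_split_initial_segment[OF \<open>summable c\<close>, of N] by simp
  also have "norm \<dots> \<le> (\<Sum>m. norm (c (m + N)))" by (rule summable_norm[OF tail])
  also have "\<dots> \<le> (\<Sum>m. B * q ^ N * q ^ m)"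
  proof (rule suminf_le[OF _ tail summable_mult[OF geom]])
    show "norm (c (m + N)) \<le> B * q ^ N * q ^ m" for m
      using c[of "m + N"] by (simp add: power_add mult_ac)
  qed
  also have "\<dots> = B * q ^ N / (1 - q)"
    using suminf_mult[OF geom, of "B * q ^ N"] q by (simp add: suminf_geometric)
  finally show "norm (suminf c - (\<Sum>m<N. c m)) \<le> B * q ^ N / (1 - q)" .
qed

context
  fixes c :: "nat \<Rightarrow> 'a::complex_normed_vector \<Rightarrow> 'b::chilbert_space" and B q :: real
  assumes bounded: "\<And>m. bounded_op (c m)"
    and geometric: "\<And>m x. norm (c m x) \<le> B * q ^ m * norm x"
    and B: "0 \<le> B" and q: "0 \<le> q" "q < 1"
begin

lemma operator_series_summable: "summable (\<lambda>m. c m x)"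
  using geometric_bound_summable_tail(1)[where c="\<lambda>m. c m x" and B="B * norm x" and q=q]
    geometric q
  by (simp add: mult_ac)

lemma operator_series_tail:
  "norm ((\<Sum>m<N. c m x) - (\<Sum>m. c m x)) \<le> B / (1 - q) * q ^ N * norm x"
  using geometric_bound_summable_tail(2)[where c="\<lambda>m. c m x" and B="B * norm x" and q=q]
    geometric q
  by (simp add: norm_minus_commute mult_ac)

lemma bounded_op_operator_series: "bounded_op (\<lambda>x. \<Sum>m. c m x)"
proof (rule bounded_op_intro)
  have lin: "clinear_map (c m)" for m by (rule bounded_op_clinear[OF bounded])
  show "(\<Sum>m. c m (x + y)) = (\<Sum>m. c m x) + (\<Sum>m. c m y)" for x y
    by (simp add: lin clinear_add suminf_add[OF operator_series_summable operator_series_summable])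
  show "(\<Sum>m. c m (a *\<^sub>C x)) = a *\<^sub>C (\<Sum>m. c m x)" for a x
  proof -
    have "bounded_linear (\<lambda>v::'b. a *\<^sub>C v)"
      by (intro bounded_linear_intro[where K="cmod a"])
        (auto simp: scaleC_add_right scaleR_scaleC scaleC_scaleC mult.commute norm_scaleC)
    then show ?thesis
      by (simp add: lin clinear_scaleC bounded_linear.suminf[OF _ operator_series_summable])
  qed
  show "norm (\<Sum>m. c m x) \<le> B / (1 - q) * norm x" for x
    using operator_series_tail[where N=0] by simp
qed

lemma operator_series_op_norm_tendsto:
  "(\<lambda>N. op_norm (\<lambda>x. (\<Sum>m<N. c m x) - (\<Sum>m. c m x))) \<longlonglongrightarrow> 0"
proof (rule tendsto_sandwich[where f="\<lambda>_. 0" and h="\<lambda>N. B / (1 - q) * q ^ N"])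
  show "\<forall>\<^sub>F N in sequentially. 0 \<le> op_norm (\<lambda>x. (\<Sum>m<N. c m x) - (\<Sum>m. c m x))"
    by (intro always_eventually allI op_norm_nonneg[OF operator_series_tail])
  show "\<forall>\<^sub>F N in sequentially. op_norm (\<lambda>x. (\<Sum>m<N. c m x) - (\<Sum>m. c m x)) \<le> B / (1 - q) * q ^ N"
    using B q by (intro always_eventually allI op_norm_le operator_series_tail) simp
  show "(\<lambda>N. B / (1 - q) * q ^ N) \<longlonglongrightarrow> 0"
    using q by (intro tendsto_mult_right_zero LIMSEQ_power_zero) simp
qed simp

end

lemma TRO_operator_series:
  assumes U: "is_TRO U" and c: "\<And>m. c m \<in> U"
    and geometric: "\<And>m x. norm (c m x) \<le> B * q ^ m * norm x"
    and B: "0 \<le> B" and q: "0 \<le> q" "q < 1"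
  shows "(\<lambda>x. \<Sum>m. c m x) \<in> U"
proof (rule TRO_limit[OF U])
  have bounded: "bounded_op (c m)" for m by (rule TRO_bounded[OF U c])
  show "(\<lambda>x. \<Sum>m<N. c m x) \<in> U" for N by (rule TRO_sum[OF U]) (auto intro: c)
  show "bounded_op (\<lambda>x. \<Sum>m. c m x)"
    by (rule bounded_op_operator_series[OF bounded geometric B q])
  show "(\<lambda>N. op_norm (\<lambda>x. (\<Sum>m<N. c m x) - (\<Sum>m. c m x))) \<longlonglongrightarrow> 0"
    by (rule operator_series_op_norm_tendsto[OF bounded geometric B q])
qed

section \<open>Solving the resolvent equation inside a TRO\<close>

lemma mat_triple_scaleR_right:
  assumes "mat_bounded n p A" "mat_bounded n p B" "i < n"
  shows "mat_triple n p A B (\<lambda>l k x. r *\<^sub>R C l k x) i k x = r *\<^sub>R mat_triple n p A B C i k x"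
proof -
  have "A i j (adj (B l j) (r *\<^sub>R v)) = r *\<^sub>R A i j (adj (B l j) v)" if "j < p" "l < n" for j l v
    using assms that
    by (simp add: mat_bounded_clinear clinear_scaleR bounded_op_clinear[OF bounded_op_adj]
        mat_bounded_def)
  then show ?thesis
    using assms by (simp add: mat_triple_entry scaleR_sum_right)
qed

lemma mat_triple_suminf:
  assumes A: "mat_bounded n p A" and B: "mat_bounded n p B" and "i < n"
    and summable: "\<And>l. l < n \<Longrightarrow> summable (\<lambda>m. C m l k x)"
  shows "mat_triple n p A B (\<lambda>l k x. \<Sum>m. C m l k x) i k x = (\<Sum>m. mat_triple n p A B (C m) i k x)"
proof -
  define G where "G j l v = A i j (adj (B l j) v)" for j l v
  have G: "bounded_linear (G j l)" if "j < p" "l < n" for j l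
  proof -
    have "bounded_op (A i j)" "bounded_op (B l j)"
      using A B \<open>i < n\<close> that by (auto simp: mat_bounded_def)
    then have "bounded_op (\<lambda>v. A i j (adj (B l j) v))"
      by (intro bounded_op_comp[of "A i j" "adj (B l j)"] bounded_op_adj)
    then show ?thesis unfolding G_def by (rule bounded_op_bounded_linear)
  qed
  have G_summable: "summable (\<lambda>m. G j l (C m l k x))" if "j < p" "l < n" for j l
    by (rule bounded_linear.summable[OF G[OF that] summable[OF that(2)]])
  have "mat_triple n p A B (\<lambda>l k x. \<Sum>m. C m l k x) i k x = (\<Sum>j<p. \<Sum>l<n. G j l (\<Sum>m. C m l k x))"
    using A \<open>i < n\<close> by (simp add: mat_triple_entry G_def)
  also have "\<dots> = (\<Sum>j<p. \<Sum>m. \<Sum>l<n. G j l (C m l k x))"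
  proof (rule sum.cong[OF refl])
    fix j assume "j \<in> {..<p}"
    then have "G j l (\<Sum>m. C m l k x) = (\<Sum>m. G j l (C m l k x))" if "l \<in> {..<n}" for l
      using that by (intro bounded_linear.suminf G summable) auto
    then have "(\<Sum>l<n. G j l (\<Sum>m. C m l k x)) = (\<Sum>l<n. \<Sum>m. G j l (C m l k x))"
      by (rule sum.cong[OF refl])
    also have "\<dots> = (\<Sum>m. \<Sum>l<n. G j l (C m l k x))"
      using \<open>j \<in> {..<p}\<close> by (intro suminf_sum[symmetric] G_summable) auto
    finally show "(\<Sum>l<n. G j l (\<Sum>m. C m l k x)) = (\<Sum>m. \<Sum>l<n. G j l (C m l k x))" .
  qed
  also have "\<dots> = (\<Sum>m. \<Sum>j<p. \<Sum>l<n. G j l (C m l k x))"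
    by (intro suminf_sum[symmetric] summable_sum G_summable) auto
  also have "\<dots> = (\<Sum>m. mat_triple n p A B (C m) i k x)"
    using A \<open>i < n\<close> by (simp add: mat_triple_entry G_def)
  finally show ?thesis .
qed

primrec triple_power ::
  "nat \<Rightarrow> nat \<Rightarrow> (nat \<Rightarrow> nat \<Rightarrow> ('a::chilbert_space \<Rightarrow> 'b::chilbert_space)) \<Rightarrow> nat \<Rightarrow>
    nat \<Rightarrow> nat \<Rightarrow> ('a \<Rightarrow> 'b)" where
  "triple_power n p X 0 = X"
| "triple_power n p X (Suc m) = mat_triple n p X X (triple_power n p X m)"

lemma TRO_triple_power:
  "is_TRO U \<Longrightarrow> \<forall>i<n. \<forall>k<p. X i k \<in> U \<Longrightarrow> \<forall>i<n. \<forall>k<p. triple_power n p X m i k \<in> U"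
  by (induction m) (simp_all add: TRO_mat_triple)

lemma mat_bounded_triple_power:
  "mat_bounded n p X \<Longrightarrow> mat_bounded n p (triple_power n p X m)"
  by (induction m) (simp_all add: mat_bounded_triple)

lemma mat_norm_triple_power_le:
  assumes X: "mat_bounded n p X"
  shows "mat_norm n p (triple_power n p X m) \<le> mat_norm n p X ^ (2 * m + 1)"
proof (induction m)
  case (Suc m)
  have "mat_norm n p (triple_power n p X (Suc m)) \<le>
      mat_norm n p X * mat_norm n p X * mat_norm n p (triple_power n p X m)"
    using mat_norm_triple_le[OF X X mat_bounded_triple_power[OF X]] by simp
  also have "\<dots> \<le> mat_norm n p X * mat_norm n p X * mat_norm n p X ^ (2 * m + 1)"
    using Suc.IH mat_norm_nonneg[OF X] by (intro mult_left_mono) auto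
  finally show ?case by (simp add: power2_eq_square)
qed simp

text \<open>For \<open>M > \<parallel>X\<parallel>\<^sup>2\<close> this Neumann series solves \<open>M L = X + X X\<^sup>* L\<close>.\<close>
definition resolvent_series ::
  "real \<Rightarrow> nat \<Rightarrow> nat \<Rightarrow> (nat \<Rightarrow> nat \<Rightarrow> ('a::chilbert_space \<Rightarrow> 'b::chilbert_space)) \<Rightarrow>
    nat \<Rightarrow> nat \<Rightarrow> ('a \<Rightarrow> 'b)" where
  "resolvent_series M n p X = (\<lambda>i k x. \<Sum>m. (inverse M ^ Suc m) *\<^sub>R triple_power n p X m i k x)"

context
  fixes n p :: nat and M :: real and X :: "nat \<Rightarrow> nat \<Rightarrow> ('a::chilbert_space \<Rightarrow> 'b::chilbert_space)"
  assumes X: "mat_bounded n p X" and M: "(mat_norm n p X)\<^sup>2 < M"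
begin

lemma resolvent_series_ratio:
  "0 < M" "0 \<le> inverse M * mat_norm n p X"
  "0 \<le> inverse M * (mat_norm n p X)\<^sup>2" "inverse M * (mat_norm n p X)\<^sup>2 < 1"
proof -
  show "0 < M" using M zero_le_power2[of "mat_norm n p X"] by linarith
  then show "0 \<le> inverse M * mat_norm n p X" "0 \<le> inverse M * (mat_norm n p X)\<^sup>2"
    "inverse M * (mat_norm n p X)\<^sup>2 < 1"
    using M mat_norm_nonneg[OF X] by (simp_all add: field_simps)
qed

lemma resolvent_series_term_bound:
  assumes "i < n" "k < p"
  shows "norm ((inverse M ^ Suc m) *\<^sub>R triple_power n p X m i k x) \<le>
    (inverse M * mat_norm n p X) * (inverse M * (mat_norm n p X)\<^sup>2) ^ m * norm x"
proof -
  define r where "r = inverse M"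
  define a where "a = mat_norm n p X"
  have "0 < r" using resolvent_series_ratio(1) by (simp add: r_def)
  have "norm (r ^ Suc m *\<^sub>R triple_power n p X m i k x) = r ^ Suc m * norm (triple_power n p X m i k x)"
    using \<open>0 < r\<close> by simp
  also have "norm (triple_power n p X m i k x) \<le> mat_norm n p (triple_power n p X m) * norm x"
    by (rule norm_entry_le_mat_norm[OF mat_bounded_triple_power[OF X] assms])
  also have "\<dots> \<le> a ^ (2 * m + 1) * norm x"
    unfolding a_def by (rule mult_right_mono[OF mat_norm_triple_power_le[OF X] norm_ge_zero])
  also have "r ^ Suc m * (a ^ (2 * m + 1) * norm x) = (r * a) * (r * a\<^sup>2) ^ m * norm x"
  proof -
    have "a ^ (2 * m + 1) = a * (a\<^sup>2) ^ m" by (simp add: power_mult)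
    then show ?thesis by (simp only: power_Suc power_mult_distrib mult_ac)
  qed
  finally show ?thesis using \<open>0 < r\<close> by (simp add: mult_left_mono r_def a_def)
qed

lemma resolvent_series_summable:
  assumes "i < n" "k < p"
  shows "summable (\<lambda>m. (inverse M ^ Suc m) *\<^sub>R triple_power n p X m i k x)"
proof (rule operator_series_summable[where c="\<lambda>m x. (inverse M ^ Suc m) *\<^sub>R triple_power n p X m i k x"])
  show "bounded_op (\<lambda>x. inverse M ^ Suc m *\<^sub>R triple_power n p X m i k x)" for m
    using mat_bounded_triple_power[OF X] assms by (simp add: mat_bounded_def bounded_op_scaleR)
qed (use resolvent_series_term_bound[OF assms] resolvent_series_ratio in auto)

lemma resolvent_series_equation:
  assumes "i < n" "k < p"
  shows "M *\<^sub>R resolvent_series M n p X i k x = X i k x + mat_triple n p X X (resolvent_series M n p X) i k x"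
proof -
  define c where "c = (\<lambda>m i k x. (inverse M ^ Suc m) *\<^sub>R triple_power n p X m i k x)"
  have "0 < M" by (rule resolvent_series_ratio(1))
  have summable: "summable (\<lambda>m. c m i k x)" if "i < n" "k < p" for i k x
    unfolding c_def using that by (rule resolvent_series_summable)
  have step: "M *\<^sub>R c (Suc m) i k x = mat_triple n p X X (c m) i k x" for m
  proof -
    have "M *\<^sub>R c (Suc m) i k x = inverse M ^ Suc m *\<^sub>R triple_power n p X (Suc m) i k x"
      using \<open>0 < M\<close> by (simp add: c_def field_simps)
    also have "\<dots> = mat_triple n p X X (c m) i k x"
      using mat_triple_scaleR_right[OF X X \<open>i < n\<close>] by (simp add: c_def)
    finally show ?thesis .
  qed
  have "M *\<^sub>R resolvent_series M n p X i k x = M *\<^sub>R (\<Sum>m. c m i k x)"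
    by (simp add: resolvent_series_def c_def)
  also have "\<dots> = (\<Sum>m. M *\<^sub>R c m i k x)"
    by (rule suminf_scaleR_right[OF summable[OF assms]])
  also have "\<dots> = M *\<^sub>R c 0 i k x + (\<Sum>m. M *\<^sub>R c (Suc m) i k x)"
    using suminf_split_head[OF summable_scaleR_right[OF summable[OF assms], of M]] by simp
  also have "M *\<^sub>R c 0 i k x = X i k x"
    using \<open>0 < M\<close> by (simp add: c_def)
  also have "(\<Sum>m. M *\<^sub>R c (Suc m) i k x) = (\<Sum>m. mat_triple n p X X (c m) i k x)"
    by (simp only: step)
  also have "\<dots> = mat_triple n p X X (resolvent_series M n p X) i k x"
    using mat_triple_suminf[OF X X \<open>i < n\<close>, of "\<lambda>m l k x. c m l k x" k x] summable \<open>k < p\<close>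
    by (simp add: resolvent_series_def c_def)
  finally show ?thesis .
qed

end

lemma TRO_resolvent_series:
  assumes U: "is_TRO U" and XU: "\<forall>i<n. \<forall>k<p. X i k \<in> U" and M: "(mat_norm n p X)\<^sup>2 < M"
  shows "\<forall>i<n. \<forall>k<p. resolvent_series M n p X i k \<in> U"
proof (intro allI impI)
  fix i k assume ik: "i < n" "k < p"
  have X: "mat_bounded n p X" by (rule mat_bounded_TRO[OF U XU])
  have "(\<lambda>x. complex_of_real (inverse M ^ Suc m) *\<^sub>C triple_power n p X m i k x) \<in> U" for m
    using TRO_scaleC[OF U] TRO_triple_power[OF U XU] ik by blast
  then have "(\<lambda>x. inverse M ^ Suc m *\<^sub>R triple_power n p X m i k x) \<in> U" for m
    by (simp only: scaleC_of_real)
  then show "resolvent_series M n p X i k \<in> U"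
    unfolding resolvent_series_def
    using resolvent_series_term_bound[OF X M ik] resolvent_series_ratio[OF X M]
    by (intro TRO_operator_series[OF U]) auto
qed

section \<open>Ternary morphisms are completely contractive\<close>

lemma square_le_gap_imp_le:
  fixes t M E :: real
  assumes "0 < M" "0 \<le> E" "t \<le> M" and gap: "t\<^sup>2 \<le> 2 * E * M * (M - t)"
  shows "t \<le> (1 - 1 / (8 * E + 8)) * M"
proof (cases "t \<le> M / 2")
  case True
  have "1 / (8 * E + 8) \<le> 1 / 2" using assms by (simp add: field_simps)
  then have "1 / 2 * M \<le> (1 - 1 / (8 * E + 8)) * M" using \<open>0 < M\<close> by (intro mult_right_mono) auto
  then show ?thesis using True by linarith
next
  case False
  then have "(M / 2)\<^sup>2 < t\<^sup>2" using \<open>0 < M\<close> by (intro power_strict_mono) auto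
  then have "M * M < 8 * E * M * (M - t)" using gap by (simp add: power2_eq_square)
  then have "M < 8 * E * (M - t)" using \<open>0 < M\<close> by (simp add: mult.commute mult.left_commute)
  also have "\<dots> \<le> (8 * E + 8) * (M - t)" using \<open>t \<le> M\<close> by (intro mult_right_mono) auto
  finally show ?thesis using \<open>0 \<le> E\<close> by (simp add: field_simps)
qed

lemma power2_vec_norm_residual_le:
  fixes y :: "nat \<Rightarrow> 'b::chilbert_space" and T :: "nat \<Rightarrow> nat \<Rightarrow> ('a::chilbert_space \<Rightarrow> 'b)"
  assumes T: "mat_bounded n p T" and M: "M = (mat_norm n p T)\<^sup>2" and y: "vec_norm n y \<le> 1"
  defines "z \<equiv> mat_apply n (mat_adj T) y"
  shows "(vec_norm n (\<lambda>i. M *\<^sub>R y i - mat_apply p T z i))\<^sup>2 \<le> 2 * M * (M - (vec_norm p z)\<^sup>2)"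
proof -
  define s where "s = mat_norm n p T"
  have "0 \<le> s" "0 \<le> M" using mat_norm_nonneg[OF T] by (simp_all add: s_def M)
  have z: "vec_norm p z \<le> s"
    using mat_norm_bound_unit[OF mat_bounded_adj[OF T] y] by (simp add: z_def s_def mat_norm_adj[OF T])
  have "vec_norm n (mat_apply p T z) \<le> s * s"
    using mat_norm_bound[OF T, of z] mult_left_mono[OF z \<open>0 \<le> s\<close>] by (simp add: s_def)
  then have Tz: "(vec_norm n (mat_apply p T z))\<^sup>2 \<le> M\<^sup>2"
    using M by (intro power_mono) (simp_all add: s_def power2_eq_square)
  have "vec_inner n y (mat_apply p T z) = complex_of_real ((vec_norm p z)\<^sup>2)"
    using vec_inner_mat_adj[OF T, of z y] vec_inner_commute[of n y] vec_inner_self[of p z]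
    by (simp add: z_def)
  then have "(vec_norm n (\<lambda>i. M *\<^sub>R y i - mat_apply p T z i))\<^sup>2 =
      M\<^sup>2 * (vec_norm n y)\<^sup>2 + (vec_norm n (mat_apply p T z))\<^sup>2 - 2 * M * (vec_norm p z)\<^sup>2"
    using \<open>0 \<le> M\<close>
    by (simp add: power2_vec_norm_diff vec_norm_scaleR vec_inner_scaleR_left power_mult_distrib
        del: of_real_power)
  moreover have "M\<^sup>2 * (vec_norm n y)\<^sup>2 \<le> M\<^sup>2"
    using y by (simp add: mult_left_le power_le_one)
  ultimately show ?thesis using Tz by (simp add: algebra_simps power2_eq_square)
qed

context
  fixes n p :: nat and M :: real and T R :: "nat \<Rightarrow> nat \<Rightarrow> ('a::chilbert_space \<Rightarrow> 'b::chilbert_space)"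
  assumes T: "mat_bounded n p T" and R: "mat_bounded n p R"
    and resolvent: "\<And>i k x. i < n \<Longrightarrow> k < p \<Longrightarrow> M *\<^sub>R R i k x = T i k x + mat_triple n p T T R i k x"
begin

lemma mat_apply_resolvent:
  assumes "i < n"
  shows "mat_apply p T h i =
    M *\<^sub>R mat_apply p R h i - mat_apply p T (mat_apply n (mat_adj T) (mat_apply p R h)) i"
proof -
  have "M *\<^sub>R mat_apply p R h i = mat_apply p T h i + mat_apply p (mat_triple n p T T R) h i"
    using assms by (simp add: mat_apply_def scaleR_sum_right resolvent sum.distrib)
  then show ?thesis by (simp add: mat_apply_triple[OF T T assms])
qed

text \<open>With \<open>z = T\<^sup>* y\<close>: \<open>\<parallel>z\<parallel>\<^sup>2 = \<langle>T z, y\<rangle> = \<langle>R z, M y - T z\<rangle>\<close>.\<close>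
lemma resolvent_inner_identity:
  fixes y :: "nat \<Rightarrow> 'b"
  defines "z \<equiv> mat_apply n (mat_adj T) y"
  shows "vec_inner n (mat_apply p R z) (\<lambda>i. M *\<^sub>R y i - mat_apply p T z i) =
    complex_of_real ((vec_norm p z)\<^sup>2)"
proof -
  define w where "w = mat_apply p R z"
  have Tz_y: "vec_inner n (mat_apply p T z) y = complex_of_real ((vec_norm p z)\<^sup>2)"
    by (simp add: vec_inner_mat_adj[OF T] z_def vec_inner_self)
  have "vec_inner n (mat_apply p T z) y =
      vec_inner n (\<lambda>i. M *\<^sub>R w i - mat_apply p T (mat_apply n (mat_adj T) w) i) y"
    unfolding w_def by (rule vec_inner_cong) (rule mat_apply_resolvent)
  also have "\<dots> = complex_of_real M * vec_inner n w y - vec_inner p (mat_apply n (mat_adj T) w) z"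
    by (simp add: vec_inner_diff_left vec_inner_scaleR_left vec_inner_mat_adj[OF T] z_def)
  also have "vec_inner p (mat_apply n (mat_adj T) w) z = cnj (vec_inner p z (mat_apply n (mat_adj T) w))"
    by (rule vec_inner_commute)
  also have "\<dots> = cnj (vec_inner n (mat_apply p T z) w)" by (simp add: vec_inner_mat_adj[OF T])
  also have "\<dots> = vec_inner n w (mat_apply p T z)" by (simp add: vec_inner_commute[of n w])
  finally show ?thesis
    by (simp add: Tz_y w_def vec_inner_diff_right vec_inner_scaleR_right)
qed

lemma resolvent_adjoint_estimate:
  fixes y :: "nat \<Rightarrow> 'b"
  assumes M: "M = (mat_norm n p T)\<^sup>2" and y: "vec_norm n y \<le> 1"
  defines "t \<equiv> (vec_norm p (mat_apply n (mat_adj T) y))\<^sup>2"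
  shows "t\<^sup>2 \<le> 2 * (mat_norm n p R * mat_norm n p T)\<^sup>2 * M * (M - t)"
proof -
  define z where "z = mat_apply n (mat_adj T) y"
  define v where "v = (\<lambda>i. M *\<^sub>R y i - mat_apply p T z i)"
  have z: "vec_norm p z \<le> mat_norm n p T"
    using mat_norm_bound_unit[OF mat_bounded_adj[OF T] y] by (simp add: z_def mat_norm_adj[OF T])
  have "t = Re (vec_inner n (mat_apply p R z) v)"
    using resolvent_inner_identity[of y] by (simp add: t_def z_def v_def)
  also have "\<dots> \<le> vec_norm n (mat_apply p R z) * vec_norm n v" by (rule Re_vec_inner_le)
  also have "\<dots> \<le> mat_norm n p R * mat_norm n p T * vec_norm n v"
    using mat_norm_bound[OF R, of z] mult_left_mono[OF z mat_norm_nonneg[OF R]]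
    by (intro mult_right_mono) auto
  finally have "t\<^sup>2 \<le> (mat_norm n p R * mat_norm n p T * vec_norm n v)\<^sup>2"
    by (rule power_mono) (simp add: t_def)
  also have "\<dots> = (mat_norm n p R * mat_norm n p T)\<^sup>2 * (vec_norm n v)\<^sup>2"
    by (simp add: power_mult_distrib)
  also have "\<dots> \<le> (mat_norm n p R * mat_norm n p T)\<^sup>2 * (2 * M * (M - t))"
    using power2_vec_norm_residual_le[OF T M y] by (intro mult_left_mono) (simp_all add: v_def z_def t_def)
  finally show ?thesis by (simp add: algebra_simps)
qed

lemma mat_norm_eq_0_of_resolvent:
  assumes M: "M = (mat_norm n p T)\<^sup>2"
  shows "mat_norm n p T = 0"
proof (rule ccontr)
  define s where "s = mat_norm n p T"
  define E where "E = (mat_norm n p R * s)\<^sup>2"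
  define \<theta> where "\<theta> = 1 - 1 / (8 * E + 8)"
  assume "mat_norm n p T \<noteq> 0"
  then have "0 < s" using mat_norm_nonneg[OF T] by (simp add: s_def)
  have "0 \<le> E" by (simp add: E_def)
  then have "0 \<le> \<theta>" "\<theta> < 1" by (simp_all add: \<theta>_def field_simps)
  have "vec_norm p (mat_apply n (mat_adj T) y) \<le> sqrt \<theta> * s" if "vec_norm n y \<le> 1" for y
  proof -
    have "vec_norm p (mat_apply n (mat_adj T) y) \<le> s"
      using mat_norm_bound_unit[OF mat_bounded_adj[OF T] that] by (simp add: s_def mat_norm_adj[OF T])
    then have "(vec_norm p (mat_apply n (mat_adj T) y))\<^sup>2 \<le> M"
      using M by (simp add: s_def power_mono)
    then have "(vec_norm p (mat_apply n (mat_adj T) y))\<^sup>2 \<le> \<theta> * s\<^sup>2"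
      unfolding \<theta>_def using \<open>0 < s\<close> \<open>0 \<le> E\<close> resolvent_adjoint_estimate[OF M that]
      by (intro square_le_gap_imp_le) (simp_all add: M E_def s_def mult_ac)
    then have "vec_norm p (mat_apply n (mat_adj T) y) \<le> sqrt (\<theta> * s\<^sup>2)"
      by (rule real_le_rsqrt)
    also have "\<dots> = sqrt \<theta> * s" using \<open>0 < s\<close> by (simp add: real_sqrt_mult)
    finally show ?thesis .
  qed
  then have "mat_norm p n (mat_adj T) \<le> sqrt \<theta> * s" by (rule mat_norm_le_unit)
  then have "s \<le> sqrt \<theta> * s" by (simp add: mat_norm_adj[OF T] s_def)
  moreover have "sqrt \<theta> * s < s" using \<open>0 < s\<close> \<open>0 \<le> \<theta>\<close> \<open>\<theta> < 1\<close> by simp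
  ultimately show False by simp
qed

end

lemma ternary_morphism_resolvent:
  assumes U: "is_TRO U" and \<phi>: "ternary_morphism U \<phi>"
    and XU: "\<forall>i<n. \<forall>k<p. X i k \<in> U" and LU: "\<forall>i<n. \<forall>k<p. L i k \<in> U"
    and resolvent: "\<And>i k x. i < n \<Longrightarrow> k < p \<Longrightarrow> M *\<^sub>R L i k x = X i k x + mat_triple n p X X L i k x"
    and "i < n" "k < p"
  shows "M *\<^sub>R \<phi> (L i k) x =
    \<phi> (X i k) x + mat_triple n p (\<lambda>i k. \<phi> (X i k)) (\<lambda>i k. \<phi> (X i k)) (\<lambda>i k. \<phi> (L i k)) i k x"
proof -
  have "(\<lambda>x. complex_of_real M *\<^sub>C L i k x) = (\<lambda>x. X i k x + mat_triple n p X X L i k x)"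
    using resolvent[OF \<open>i < n\<close> \<open>k < p\<close>] by (simp add: scaleC_of_real)
  then have "\<phi> (\<lambda>x. complex_of_real M *\<^sub>C L i k x) = \<phi> (\<lambda>x. X i k x + mat_triple n p X X L i k x)"
    by (rule arg_cong)
  moreover have "\<phi> (\<lambda>x. complex_of_real M *\<^sub>C L i k x) = (\<lambda>x. M *\<^sub>R \<phi> (L i k) x)"
    using ternary_morphism_scaleC[OF \<phi>, of "L i k" "complex_of_real M"] LU \<open>i < n\<close> \<open>k < p\<close>
    by (simp only: scaleC_of_real)
  moreover have "\<phi> (\<lambda>x. X i k x + mat_triple n p X X L i k x) =
      (\<lambda>x. \<phi> (X i k) x + \<phi> (mat_triple n p X X L i k) x)"
    using XU TRO_mat_triple[OF U XU XU LU] \<open>i < n\<close> \<open>k < p\<close> by (simp add: ternary_morphism_add[OF \<phi>])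
  ultimately show ?thesis
    using ternary_morphism_mat_triple[OF U \<phi> XU XU LU \<open>i < n\<close> \<open>k < p\<close>] by (simp add: fun_eq_iff)
qed

lemma ternary_morphism_mat_norm_le:
  assumes U: "is_TRO U" and \<phi>: "ternary_morphism U \<phi>" and XU: "\<forall>i<n. \<forall>k<p. X i k \<in> U"
  shows "mat_norm n p (\<lambda>i k. \<phi> (X i k)) \<le> mat_norm n p X"
proof (rule ccontr)
  define T where "T = (\<lambda>i k. \<phi> (X i k))"
  define M where "M = (mat_norm n p T)\<^sup>2"
  assume "\<not> mat_norm n p (\<lambda>i k. \<phi> (X i k)) \<le> mat_norm n p X"
  then have less: "mat_norm n p X < mat_norm n p T" by (simp add: T_def)
  have X: "mat_bounded n p X" by (rule mat_bounded_TRO[OF U XU])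
  then have M: "(mat_norm n p X)\<^sup>2 < M"
    unfolding M_def using less mat_norm_nonneg by (intro power_strict_mono) auto
  define L where "L = resolvent_series M n p X"
  have LU: "\<forall>i<n. \<forall>k<p. L i k \<in> U"
    unfolding L_def by (rule TRO_resolvent_series[OF U XU M])
  have "mat_bounded n p T" "mat_bounded n p (\<lambda>i k. \<phi> (L i k))"
    using XU LU by (simp_all add: T_def mat_bounded_def ternary_morphism_bounded[OF \<phi>])
  then have "mat_norm n p T = 0"
    using ternary_morphism_resolvent[OF U \<phi> XU LU resolvent_series_equation[OF X M, folded L_def]] M_def
    by (intro mat_norm_eq_0_of_resolvent[where R="\<lambda>i k. \<phi> (L i k)" and M=M])
      (simp_all add: T_def L_def)
  then show False using less mat_norm_nonneg[OF X] by simp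
qed

section \<open>The Haagerup norm dominates the norm of \<open>\<phi> \<cdot> \<psi>\<close>\<close>

lemma bilinear_fun_zero_left:
  assumes "bilinear_fun U V f" "(\<lambda>_. 0) \<in> U" "v \<in> V"
  shows "f (\<lambda>_. 0) v = 0"
proof -
  have "\<forall>u1\<in>U. \<forall>u2\<in>U. \<forall>v\<in>V. f (\<lambda>x. u1 x + u2 x) v = f u1 v + f u2 v"
    using assms(1) unfolding bilinear_fun_def by blast
  from bspec[OF bspec[OF bspec[OF this assms(2)] assms(2)] assms(3)]
  show ?thesis by simp
qed

lemma bilinear_fun_zero_right:
  assumes "bilinear_fun U V f" "(\<lambda>_. 0) \<in> V" "u \<in> U"
  shows "f u (\<lambda>_. 0) = 0"
proof -
  have "\<forall>u\<in>U. \<forall>v1\<in>V. \<forall>v2\<in>V. f u (\<lambda>x. v1 x + v2 x) = f u v1 + f u v2"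
    using assms(1) unfolding bilinear_fun_def by blast
  from bspec[OF bspec[OF bspec[OF this assms(3)] assms(2)] assms(2)]
  show ?thesis by simp
qed

lemma sum_list_hprod:
  "(\<Sum>(u, v)\<leftarrow>hprod p X Y i j. f u v) = (\<Sum>k<p. f (X i k) (Y k j))"
  by (simp add: hprod_def comp_def interv_sum_list_conv_sum_set_nat atLeast0LessThan)

lemma bilinear_fun_tensor_map_functional:
  assumes \<phi>: "ternary_morphism U \<phi>" and \<psi>: "ternary_morphism V \<psi>"
  shows "bilinear_fun U V (\<lambda>u v. cinner z (\<phi> u (\<psi> v x)))"
  unfolding bilinear_fun_def
proof (intro conjI ballI allI)
  have lin: "clinear_map (\<phi> u)" if "u \<in> U" for u
    by (rule bounded_op_clinear[OF ternary_morphism_bounded[OF \<phi> that]])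
  fix c u u' v v' assume "u \<in> U" "u' \<in> U" "v \<in> V" "v' \<in> V"
  then show "cinner z (\<phi> (\<lambda>x. u x + u' x) (\<psi> v x)) = cinner z (\<phi> u (\<psi> v x)) + cinner z (\<phi> u' (\<psi> v x))"
    and "cinner z (\<phi> (\<lambda>x. c *\<^sub>C u x) (\<psi> v x)) = c * cinner z (\<phi> u (\<psi> v x))"
    and "cinner z (\<phi> u (\<psi> (\<lambda>x. v x + v' x) x)) = cinner z (\<phi> u (\<psi> v x)) + cinner z (\<phi> u (\<psi> v' x))"
    and "cinner z (\<phi> u (\<psi> (\<lambda>x. c *\<^sub>C v x) x)) = c * cinner z (\<phi> u (\<psi> v x))"
    by (simp_all add: ternary_morphism_add[OF \<phi>] ternary_morphism_add[OF \<psi>]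
        ternary_morphism_scaleC[OF \<phi>] ternary_morphism_scaleC[OF \<psi>] lin clinear_add clinear_scaleC
        cinner_add_right cinner_scaleC_right)
qed

lemma tensor_map_hprod:
  assumes \<phi>: "ternary_morphism U \<phi>" and \<psi>: "ternary_morphism V \<psi>"
    and "tensor_eq U V (hprod p X Y i j) w"
  shows "tensor_map \<phi> \<psi> w = mat_mult p (\<lambda>i k. \<phi> (X i k)) (\<lambda>k j. \<psi> (Y k j)) i j"
proof (rule ext, rule cinner_extensionality)
  fix x z
  have "cinner z (tensor_map \<phi> \<psi> w x) = (\<Sum>(u, v)\<leftarrow>w. cinner z (\<phi> u (\<psi> v x)))"
    by (simp add: tensor_map_def cinner_sum_list_right case_prod_unfold)
  also have "\<dots> = (\<Sum>(u, v)\<leftarrow>hprod p X Y i j. cinner z (\<phi> u (\<psi> v x)))"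
    using assms bilinear_fun_tensor_map_functional[OF \<phi> \<psi>] unfolding tensor_eq_def by metis
  also have "\<dots> = (\<Sum>k<p. cinner z (\<phi> (X i k) (\<psi> (Y k j) x)))"
    by (rule sum_list_hprod)
  also have "\<dots> = cinner z (mat_mult p (\<lambda>i k. \<phi> (X i k)) (\<lambda>k j. \<psi> (Y k j)) i j x)"
    by (simp add: mat_mult_def cinner_sum_right)
  finally show "cinner z (tensor_map \<phi> \<psi> w x) =
      cinner z (mat_mult p (\<lambda>i k. \<phi> (X i k)) (\<lambda>k j. \<psi> (Y k j)) i j x)" .
qed

lemma sum_list_concat_tagged:
  assumes "distinct xs"
  shows "(\<Sum>e\<leftarrow>concat (map (\<lambda>b. map (Pair b) (F b)) xs). if fst e = a then g (snd e) else 0) =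
    (if a \<in> set xs then (\<Sum>e\<leftarrow>F a. g e) else 0)"
  using assms
proof (induction xs)
  case (Cons b xs)
  have "(\<Sum>e\<leftarrow>map (Pair b) ys. if fst e = a then g (snd e) else 0) =
      (if b = a then (\<Sum>e\<leftarrow>ys. g e) else 0)" for ys
    by (induction ys) auto
  then show ?case using Cons by auto
qed simp

text \<open>Every \<open>W \<in> M\<^sub>n(U \<otimes> V)\<close> is a Haagerup product: list all the elementary tensors
  \<open>u \<otimes> v\<close> occurring in the entries \<open>W i j\<close>, and let the \<open>k\<close>-th one contribute \<open>u\<close> to row
  \<open>i\<close> of \<open>X\<close> and \<open>v\<close> to column \<open>j\<close> of \<open>Y\<close>.\<close>
lemma haagerup_decomposition_exists:
  assumes U: "is_TRO U" and V: "is_TRO V" and W: "\<forall>i<n. \<forall>j<n. set (W i j) \<subseteq> U \<times> V"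
  shows "\<exists>p X Y. (\<forall>i<n. \<forall>k<p. X i k \<in> U) \<and> (\<forall>k<p. \<forall>j<n. Y k j \<in> V) \<and>
    (\<forall>i<n. \<forall>j<n. tensor_eq U V (hprod p X Y i j) (W i j))"
proof -
  define ijs where "ijs = List.product [0..<n] [0..<n]"
  define Z where "Z = concat (map (\<lambda>ij. map (Pair ij) (W (fst ij) (snd ij))) ijs)"
  define X where "X i k = (if fst (fst (Z ! k)) = i then fst (snd (Z ! k)) else (\<lambda>_. 0))" for i k
  define Y where "Y k j = (if snd (fst (Z ! k)) = j then snd (snd (Z ! k)) else (\<lambda>_. 0))" for k j
  have Z: "fst e \<in> set ijs" "snd e \<in> U \<times> V" if "e \<in> set Z" for e
    using that W by (fastforce simp: Z_def ijs_def)+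
  have XU: "\<forall>i<n. \<forall>k<length Z. X i k \<in> U" and YV: "\<forall>k<length Z. \<forall>j<n. Y k j \<in> V"
    using Z[OF nth_mem] TRO_zero[OF U] TRO_zero[OF V] by (auto simp: X_def Y_def mem_Times_iff)
  have "tensor_eq U V (hprod (length Z) X Y i j) (W i j)" if "i < n" "j < n" for i j
    unfolding tensor_eq_def
  proof (intro allI impI)
    fix f assume f: "bilinear_fun U V f"
    have "f (X i k) (Y k j) = (if fst (Z ! k) = (i, j) then f (fst (snd (Z ! k))) (snd (snd (Z ! k))) else 0)"
      if "k < length Z" for k
      using XU YV that \<open>i < n\<close> \<open>j < n\<close> Z[OF nth_mem[OF that]] TRO_zero[OF U] TRO_zero[OF V]
        bilinear_fun_zero_left[OF f] bilinear_fun_zero_right[OF f]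
      by (auto simp: X_def Y_def prod_eq_iff mem_Times_iff)
    then have "(\<Sum>(u, v)\<leftarrow>hprod (length Z) X Y i j. f u v) =
        (\<Sum>k<length Z. if fst (Z ! k) = (i, j) then f (fst (snd (Z ! k))) (snd (snd (Z ! k))) else 0)"
      by (simp add: sum_list_hprod)
    also have "\<dots> = (\<Sum>e\<leftarrow>Z. if fst e = (i, j) then f (fst (snd e)) (snd (snd e)) else 0)"
      by (simp add: sum_list_sum_nth atLeast0LessThan)
    also have "\<dots> = (\<Sum>(u, v)\<leftarrow>W i j. f u v)"
      using that unfolding Z_def
      by (subst sum_list_concat_tagged) (auto simp: ijs_def distinct_product case_prod_unfold)
    finally show "(\<Sum>(u, v)\<leftarrow>hprod (length Z) X Y i j. f u v) = (\<Sum>(u, v)\<leftarrow>W i j. f u v)" .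
  qed
  then show ?thesis using XU YV by blast
qed

lemma mat_norm_tensor_map_le:
  assumes U: "is_TRO U" and V: "is_TRO V"
    and \<phi>: "ternary_morphism U \<phi>" and \<psi>: "ternary_morphism V \<psi>"
    and XU: "\<forall>i<n. \<forall>k<p. X i k \<in> U" and YV: "\<forall>k<p. \<forall>j<n. Y k j \<in> V"
    and W: "\<forall>i<n. \<forall>j<n. tensor_eq U V (hprod p X Y i j) (W i j)"
  shows "mat_norm n n (\<lambda>i j. tensor_map \<phi> \<psi> (W i j)) \<le> mat_norm n p X * mat_norm p n Y"
proof -
  define T where "T = (\<lambda>i k. \<phi> (X i k))"
  define S where "S = (\<lambda>k j. \<psi> (Y k j))"
  have T: "mat_bounded n p T" and S: "mat_bounded p n S"
    using XU YV by (simp_all add: T_def S_def mat_bounded_def ternary_morphism_bounded[OF \<phi>]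
        ternary_morphism_bounded[OF \<psi>])
  have "mat_norm n n (\<lambda>i j. tensor_map \<phi> \<psi> (W i j)) = mat_norm n n (mat_mult p T S)"
    using W by (intro mat_norm_cong) (simp add: tensor_map_hprod[OF \<phi> \<psi>] T_def S_def)
  also have "\<dots> \<le> mat_norm n p T * mat_norm p n S" by (rule mat_norm_mult_le[OF T S])
  also have "\<dots> \<le> mat_norm n p X * mat_norm p n Y"
    using ternary_morphism_mat_norm_le[OF U \<phi> XU] ternary_morphism_mat_norm_le[OF V \<psi>, of p n Y]
      YV mat_norm_nonneg[OF T] mat_norm_nonneg[OF S]
    by (intro mult_mono) (simp_all add: T_def S_def)
  finally show ?thesis .
qed

theorem corollary3p8:
  fixes U :: "('h1::chilbert_space \<Rightarrow> 'k1::chilbert_space) set"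
    and V :: "('h2::chilbert_space \<Rightarrow> 'k2::chilbert_space) set"
    and \<phi> :: "('h1 \<Rightarrow> 'k1) \<Rightarrow> ('h::chilbert_space \<Rightarrow> 'h)"
    and \<psi> :: "('h2 \<Rightarrow> 'k2) \<Rightarrow> ('h \<Rightarrow> 'h)"
    and n :: nat
    and W :: "nat \<Rightarrow> nat \<Rightarrow> (('h1 \<Rightarrow> 'k1) \<times> ('h2 \<Rightarrow> 'k2)) list"
  assumes "is_TRO U" and "is_TRO V"
    and "ternary_morphism U \<phi>" and "ternary_morphism V \<psi>"
    and "commuting_pair U V \<phi> \<psi>"
    and "\<forall>i<n. \<forall>j<n. set (W i j) \<subseteq> U \<times> V"
  shows "mat_norm n n (\<lambda>i j. tensor_map \<phi> \<psi> (W i j)) \<le> h_norm U V n W"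
  unfolding h_norm_def
  using haagerup_decomposition_exists[OF assms(1,2,6)] mat_norm_tensor_map_le[OF assms(1-4)]
  by (intro cInf_greatest) blast+

end
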